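(* Let $(\alpha_0,x_0)$ be a pointed transitive pre-action of $\Gamma=\mathrm{BS}(m,n)$ and let $\alpha$ be its maximal forest saturation. Then $\mathrm{Stab}_\alpha(x_0)=\mathrm{Stab}_{\alpha_0}(x_0)$. In particular the action $\alpha$ is isomorphic (as a pointed action) to $\mathrm{Stab}_{\alpha_0}(x_0)\backslash\Gamma\curvearrowleft\Gamma$ with basepoint the trivial coset.
   Context: $\mathrm{BS}(m,n)=\langle b,t\mid tb^mt^{-1}=b^n\rangle$, $|m|,|n|\ge2$; maps act on the right. A pre-action is $(X,\beta,\tau)$ with $\beta$ a bijection of $X$, $\tau$ a partial bijection, $\mathrm{dom}(\tau)$ $\beta^n$-invariant, $\mathrm{rng}(\tau)$ $\beta^m$-invariant, and $x\tau\beta^m=x\beta^n\tau$ on $\mathrm{dom}(\tau)$; saturated means $\mathrm{dom}(\tau)=\mathrm{rng}(\tau)=X$ (a genuine action). Schreier graph $\mathrm{Sch}(\alpha)$: vertices $X$, $b$-edges $x\to x\beta$ and $t$-edges $x\to x\tau$ ($x\in\mathrm{dom}\tau$), with opposite inverse-labelled edges; transitive means connected. For a path $c$, $\Psi(c)\in\Gamma$ is the element represented by its label; $\mathrm{Stab}_\alpha(x_0)=\Psi(\pi_1(\mathrm{Sch}(\alpha),x_0))$ (for a saturated pre-action this is the usual stabilizer). Bass–Serre graph $\mathrm{BS}(\alpha)$: vertices are $\beta$-orbits, positive edges are $\beta^n$-orbits in $\mathrm{dom}(\tau)$ (the edge $x\langle\beta^n\rangle$ goes from $x\langle\beta\rangle$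 to $x\tau\langle\beta\rangle$), negative edges are $\beta^m$-orbits in $\mathrm{rng}(\tau)$ (opposites); labels are cardinalities. A maximal forest saturation of $\alpha_0$ is a saturated pre-action $\alpha$ extending $\alpha_0$ such that in $\mathrm{BS}(\alpha)$: the subgraph induced on old vertices is $\mathrm{BS}(\alpha_0)$, the subgraph induced on new vertices is a forest, each forest component is attached to $\mathrm{BS}(\alpha_0)$ by a single pair of opposite edges, and each new vertex $v'$ with parent $v$ (neighbour closer to $\mathrm{BS}(\alpha_0)$) has label $L(v')=|m|L(v)/\gcd(L(v),n)$ if the edge from $v$ to $v'$ is positive and $L(v')=|n|L(v)/\gcd(L(v),m)$ if negative (with $\gcd(\infty,k)=|k|$, $\infty$ labels stay $\infty$). It is unique up to isomorphism fixing $\alpha_0$. *)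

theory Defs
  imports Main "HOL-Library.Extended_Nat"
begin

datatype gen = B | T

text \<open>A letter is a generator with a sign (True = the generator, False = its inverse).\<close>
type_synonym letter = "gen \<times> bool"
type_synonym word = "letter list"

definition bpow :: "int \<Rightarrow> word" where
  "bpow k = replicate (nat \<bar>k\<bar>) (B, k \<ge> 0)"

text \<open>The congruence on words generated by free cancellation and the relator
  t b^m t^{-1} = b^n; its classes are the elements of BS(m,n).\<close>
inductive bs_eq :: "int \<Rightarrow> int \<Rightarrow> word \<Rightarrow> word \<Rightarrow> bool" for m n where
  refl: "bs_eq m n w w"
| sym: "bs_eq m n u v \<Longrightarrow> bs_eq m n v u"
| trans: "bs_eq m n u v \<Longrightarrow> bs_eq m n v w \<Longrightarrow> bs_eq m n u w"
| cong: "bs_eq m n u v \<Longrightarrow> bs_eq m n (a @ u @ c) (a @ v @ c)"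
| cancel: "bs_eq m n [(g, s), (g, \<not> s)] []"
| relator: "bs_eq m n ([(T, True)] @ bpow m @ [(T, False)]) (bpow n)"

definition cls :: "int \<Rightarrow> int \<Rightarrow> word \<Rightarrow> word set" where
  "cls m n w = {u. bs_eq m n w u}"

text \<open>Right coset H g (g = cls w) of a subset H of the group.\<close>
definition coset :: "int \<Rightarrow> int \<Rightarrow> word set set \<Rightarrow> word \<Rightarrow> word set set" where
  "coset m n H w = {cls m n (u @ w) | u. cls m n u \<in> H}"

definition coset_space :: "int \<Rightarrow> int \<Rightarrow> word set set \<Rightarrow> word set set set" where
  "coset_space m n H = {coset m n H w | w. True}"

definition coset_act :: "int \<Rightarrow> int \<Rightarrow> word set set \<Rightarrow> letter \<Rightarrow> word set set" where
  "coset_act m n C s = {cls m n (u @ [s]) | u. cls m n u \<in> C}"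

record 'a preact =
  carrier :: "'a set"
  bmap :: "'a \<Rightarrow> 'a"
  tmap :: "'a \<rightharpoonup> 'a"

text \<open>Integer powers of beta (maps act on the right; x beta^k).\<close>
definition bp :: "'a preact \<Rightarrow> int \<Rightarrow> 'a \<Rightarrow> 'a" where
  "bp \<alpha> k x = (if k \<ge> 0 then (bmap \<alpha> ^^ nat k) x
                else (inv_into (carrier \<alpha>) (bmap \<alpha>) ^^ nat (- k)) x)"

definition pre_action :: "int \<Rightarrow> int \<Rightarrow> 'a preact \<Rightarrow> bool" where
  "pre_action m n \<alpha> \<longleftrightarrow>
     bij_betw (bmap \<alpha>) (carrier \<alpha>) (carrier \<alpha>)
   \<and> dom (tmap \<alpha>) \<subseteq> carrier \<alpha> \<and> ran (tmap \<alpha>) \<subseteq> carrier \<alpha>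
   \<and> inj_on (tmap \<alpha>) (dom (tmap \<alpha>))
   \<and> (\<forall>x \<in> carrier \<alpha>. x \<in> dom (tmap \<alpha>) \<longleftrightarrow> bp \<alpha> n x \<in> dom (tmap \<alpha>))
   \<and> (\<forall>x \<in> carrier \<alpha>. x \<in> ran (tmap \<alpha>) \<longleftrightarrow> bp \<alpha> m x \<in> ran (tmap \<alpha>))
   \<and> (\<forall>x \<in> dom (tmap \<alpha>). bp \<alpha> m (the (tmap \<alpha> x)) = the (tmap \<alpha> (bp \<alpha> n x)))"

definition saturated :: "'a preact \<Rightarrow> bool" where
  "saturated \<alpha> \<longleftrightarrow> dom (tmap \<alpha>) = carrier \<alpha> \<and> ran (tmap \<alpha>) = carrier \<alpha>"

definition extends :: "'a preact \<Rightarrow> 'a preact \<Rightarrow> bool" where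
  "extends \<alpha> \<alpha>0 \<longleftrightarrow> carrier \<alpha>0 \<subseteq> carrier \<alpha>
     \<and> (\<forall>x \<in> carrier \<alpha>0. bmap \<alpha> x = bmap \<alpha>0 x) \<and> tmap \<alpha>0 \<subseteq>\<^sub>m tmap \<alpha>"

text \<open>sch_path a x w y: there is a path in Sch(a) from x to y with label w
  (b-edges, t-edges, and their opposite inverse-labelled edges).\<close>
inductive sch_path :: "'a preact \<Rightarrow> 'a \<Rightarrow> word \<Rightarrow> 'a \<Rightarrow> bool" for \<alpha> where
  nil: "x \<in> carrier \<alpha> \<Longrightarrow> sch_path \<alpha> x [] x"
| b_fwd: "x \<in> carrier \<alpha> \<Longrightarrow> sch_path \<alpha> (bmap \<alpha> x) w y \<Longrightarrow> sch_path \<alpha> x ((B, True) # w) y"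
| b_bwd: "x \<in> carrier \<alpha> \<Longrightarrow> sch_path \<alpha> (inv_into (carrier \<alpha>) (bmap \<alpha>) x) w y
            \<Longrightarrow> sch_path \<alpha> x ((B, False) # w) y"
| t_fwd: "tmap \<alpha> x = Some z \<Longrightarrow> sch_path \<alpha> z w y \<Longrightarrow> sch_path \<alpha> x ((T, True) # w) y"
| t_bwd: "tmap \<alpha> z = Some x \<Longrightarrow> sch_path \<alpha> z w y \<Longrightarrow> sch_path \<alpha> x ((T, False) # w) y"

definition transitive :: "'a preact \<Rightarrow> bool" where
  "transitive \<alpha> \<longleftrightarrow> (\<forall>x \<in> carrier \<alpha>. \<forall>y \<in> carrier \<alpha>. \<exists>w. sch_path \<alpha> x w y)"

text \<open>Stab_a(x0) = Psi(pi_1(Sch(a), x0)) as a subset of BS(m,n).\<close>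
definition stab :: "int \<Rightarrow> int \<Rightarrow> 'a preact \<Rightarrow> 'a \<Rightarrow> word set set" where
  "stab m n \<alpha> x0 = cls m n ` {w. sch_path \<alpha> x0 w x0}"

definition orb :: "'a preact \<Rightarrow> int \<Rightarrow> 'a \<Rightarrow> 'a set" where
  "orb \<alpha> k x = {bp \<alpha> (k * j) x | j. True}"

definition bs_V :: "'a preact \<Rightarrow> 'a set set" where
  "bs_V \<alpha> = orb \<alpha> 1 ` carrier \<alpha>"

text \<open>Edges are tagged: (True, e) positive edges (beta^n-orbits in dom tau),
  (False, e) negative edges (beta^m-orbits in rng tau).\<close>
definition bs_E :: "int \<Rightarrow> int \<Rightarrow> 'a preact \<Rightarrow> (bool \<times> 'a set) set" where
  "bs_E m n \<alpha> = {(True, orb \<alpha> n x) | x. x \<in> dom (tmap \<alpha>)}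
              \<union> {(False, orb \<alpha> m y) | y. y \<in> ran (tmap \<alpha>)}"

definition bs_src :: "'a preact \<Rightarrow> bool \<times> 'a set \<Rightarrow> 'a set" where
  "bs_src \<alpha> e = (\<Union>x \<in> snd e. orb \<alpha> 1 x)"

definition bs_opp :: "'a preact \<Rightarrow> bool \<times> 'a set \<Rightarrow> bool \<times> 'a set" where
  "bs_opp \<alpha> e = (if fst e then (False, (\<lambda>x. the (tmap \<alpha> x)) ` snd e)
                  else (True, {x. \<exists>y \<in> snd e. tmap \<alpha> x = Some y}))"

definition bs_tgt :: "'a preact \<Rightarrow> bool \<times> 'a set \<Rightarrow> 'a set" where
  "bs_tgt \<alpha> e = bs_src \<alpha> (bs_opp \<alpha> e)"

definition lab :: "'a set \<Rightarrow> enat" where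
  "lab v = (if finite v then enat (card v) else \<infinity>)"

text \<open>Walks in the subgraph of BS(a) induced on the vertex set W.\<close>
inductive bs_walk :: "int \<Rightarrow> int \<Rightarrow> 'a preact \<Rightarrow> 'a set set \<Rightarrow> 'a set \<Rightarrow> (bool \<times> 'a set) list \<Rightarrow> 'a set \<Rightarrow> bool"
  for m n \<alpha> W where
  nil: "v \<in> W \<Longrightarrow> bs_walk m n \<alpha> W v [] v"
| cons: "e \<in> bs_E m n \<alpha> \<Longrightarrow> bs_src \<alpha> e = v \<Longrightarrow> v \<in> W \<Longrightarrow> bs_walk m n \<alpha> W (bs_tgt \<alpha> e) es w
          \<Longrightarrow> bs_walk m n \<alpha> W v (e # es) w"

definition reduced :: "'a preact \<Rightarrow> (bool \<times> 'a set) list \<Rightarrow> bool" where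
  "reduced \<alpha> es \<longleftrightarrow> (\<forall>i. Suc i < length es \<longrightarrow> es ! Suc i \<noteq> bs_opp \<alpha> (es ! i))"

definition is_forest :: "int \<Rightarrow> int \<Rightarrow> 'a preact \<Rightarrow> 'a set set \<Rightarrow> bool" where
  "is_forest m n \<alpha> W \<longleftrightarrow> \<not> (\<exists>v es. es \<noteq> [] \<and> bs_walk m n \<alpha> W v es v \<and> reduced \<alpha> es)"

definition component :: "int \<Rightarrow> int \<Rightarrow> 'a preact \<Rightarrow> 'a set set \<Rightarrow> 'a set \<Rightarrow> 'a set set" where
  "component m n \<alpha> W v = {w. \<exists>es. bs_walk m n \<alpha> W v es w}"

definition dist_to :: "int \<Rightarrow> int \<Rightarrow> 'a preact \<Rightarrow> 'a set set \<Rightarrow> 'a set \<Rightarrow> nat" where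
  "dist_to m n \<alpha> W0 v = (LEAST k. \<exists>es w. bs_walk m n \<alpha> (bs_V \<alpha>) v es w \<and> w \<in> W0 \<and> length es = k)"

text \<open>Label of a child vertex; pos = the edge from the parent is positive.
  gcd(infinity,k) = |k| and infinite labels stay infinite.\<close>
definition child_lab :: "int \<Rightarrow> int \<Rightarrow> bool \<Rightarrow> enat \<Rightarrow> enat" where
  "child_lab m n pos L = (case L of
      \<infinity> \<Rightarrow> \<infinity>
    | enat l \<Rightarrow> enat (if pos then nat \<bar>m\<bar> * l div gcd l (nat \<bar>n\<bar>)
                       else nat \<bar>n\<bar> * l div gcd l (nat \<bar>m\<bar>)))"

definition max_forest_saturation :: "int \<Rightarrow> int \<Rightarrow> 'a preact \<Rightarrow> 'a preact \<Rightarrow> bool" where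
  "max_forest_saturation m n \<alpha>0 \<alpha> \<longleftrightarrow>
     pre_action m n \<alpha> \<and> saturated \<alpha> \<and> extends \<alpha> \<alpha>0
   \<and> (let V0 = bs_V \<alpha>0; N = bs_V \<alpha> - bs_V \<alpha>0 in
        {e \<in> bs_E m n \<alpha>. bs_src \<alpha> e \<in> V0 \<and> bs_tgt \<alpha> e \<in> V0} = bs_E m n \<alpha>0
      \<and> is_forest m n \<alpha> N
      \<and> (\<forall>v \<in> N. \<exists>!e. e \<in> bs_E m n \<alpha> \<and> bs_src \<alpha> e \<in> V0 \<and> bs_tgt \<alpha> e \<in> component m n \<alpha> N v)
      \<and> (\<forall>e \<in> bs_E m n \<alpha>. bs_tgt \<alpha> e \<in> N
            \<and> dist_to m n \<alpha> V0 (bs_src \<alpha> e) < dist_to m n \<alpha> V0 (bs_tgt \<alpha> e)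
            \<longrightarrow> lab (bs_tgt \<alpha> e) = child_lab m n (fst e) (lab (bs_src \<alpha> e))))"

end

theory Submission
  imports Defs
begin

text \<open>
  A loop at \<open>x0\<close> in the Schreier graph of \<open>\<alpha>\<close> that leaves the old carrier enters
  the forest part.  Look at a vertex of maximal depth \<open>d\<close> the loop visits: it enters
  it by a \<open>t\<^sup>\<plusminus>\<close>-edge from depth \<open>d - 1\<close>, moves inside it by a power \<open>b\<^sup>j\<close> and leaves
  by a \<open>t\<^sup>\<plusminus>\<close>-edge.  Since the forest has no cycles and each new vertex has a unique edge
  towards the old graph, it must leave through the edge it came in by.  The label
  condition makes the orbit size of that vertex a multiple of \<open>m\<close> (resp. \<open>n\<close>), so \<open>j\<close> is a
  multiple \<open>m i\<close> and the subword \<open>t b\<^sup>m\<^sup>i t\<^sup>-\<^sup>1\<close> equals \<open>b\<^sup>n\<^sup>i\<close> in the group.  This lowers the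
  number of \<open>t\<close>-letters, and iterating turns the loop into an equivalent loop in
  \<open>Sch(\<alpha>\<^sub>0)\<close>.  Hence the stabilisers agree; since \<alpha> is transitive, orbit--stabiliser
  identifies it with the coset action.
\<close>

section \<open>Powers and orbits of a bijection\<close>

locale bmap_bij =
  fixes \<alpha> :: "'a preact"
  assumes bij: "bij_betw (bmap \<alpha>) (carrier \<alpha>) (carrier \<alpha>)"
begin

abbreviation "C \<equiv> carrier \<alpha>"
abbreviation "\<beta> \<equiv> bmap \<alpha>"
abbreviation "\<beta>' \<equiv> inv_into (carrier \<alpha>) (bmap \<alpha>)"
abbreviation V :: "'a \<Rightarrow> 'a set" where "V x \<equiv> orb \<alpha> 1 x"

lemma bmap_in: "x \<in> C \<Longrightarrow> \<beta> x \<in> C"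
  using bij by (auto simp: bij_betw_def)

lemma binv_in: "x \<in> C \<Longrightarrow> \<beta>' x \<in> C"
  using bij by (metis bij_betw_def inv_into_into)

lemma binv_bmap: "x \<in> C \<Longrightarrow> \<beta>' (\<beta> x) = x"
  using bij by (simp add: bij_betw_def)

lemma bmap_binv: "x \<in> C \<Longrightarrow> \<beta> (\<beta>' x) = x"
  using bij by (simp add: bij_betw_def f_inv_into_f)

lemma funpow_bmap_in: "x \<in> C \<Longrightarrow> (\<beta> ^^ j) x \<in> C"
  by (induction j) (auto simp: bmap_in)

lemma funpow_binv_in: "x \<in> C \<Longrightarrow> (\<beta>' ^^ j) x \<in> C"
  by (induction j) (auto simp: binv_in)

lemma bp_in: "x \<in> C \<Longrightarrow> bp \<alpha> k x \<in> C"
  by (simp add: bp_def funpow_bmap_in funpow_binv_in)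

lemma bp_0 [simp]: "bp \<alpha> 0 x = x"
  by (simp add: bp_def)

lemma bp_1: "bp \<alpha> 1 x = \<beta> x"
  by (simp add: bp_def)

lemma bp_minus_1: "bp \<alpha> (-1) x = \<beta>' x"
  by (simp add: bp_def)

lemma bp_succ:
  assumes "x \<in> C" shows "bp \<alpha> (k + 1) x = \<beta> (bp \<alpha> k x)"
proof (cases "k \<ge> 0")
  case True
  then have "nat (k + 1) = Suc (nat k)" by simp
  then show ?thesis using True by (simp add: bp_def)
next
  case False
  define j where "j = nat (- k - 1)"
  have j: "k = - int (Suc j)" using False by (simp add: j_def)
  then have "nat (- k) = Suc j" "nat (-(k + 1)) = j" by simp_all
  then show ?thesis
    using False j assms by (simp add: bp_def bmap_binv funpow_binv_in)
qed

lemma bp_pred: "x \<in> C \<Longrightarrow> bp \<alpha> (k - 1) x = \<beta>' (bp \<alpha> k x)"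
  using bp_succ[of x "k - 1"] by (simp add: binv_bmap bp_in)

lemma bp_add: "x \<in> C \<Longrightarrow> bp \<alpha> (k + l) x = bp \<alpha> k (bp \<alpha> l x)"
proof (induction k rule: int_induct[where k = 0])
  case (step1 i)
  then show ?case using bp_succ[of x "i + l"] bp_succ[of "bp \<alpha> l x" i] bp_in
    by (simp add: ac_simps)
next
  case (step2 i)
  then show ?case using bp_pred[of x "i + l"] bp_pred[of "bp \<alpha> l x" i] bp_in
    by (simp add: algebra_simps)
qed simp

lemma bp_cancel: "x \<in> C \<Longrightarrow> bp \<alpha> (- k) (bp \<alpha> k x) = x"
  using bp_add[of x "- k" k] by simp

lemma bp_mult_invariant:
  assumes inv: "\<forall>x \<in> C. P x \<longleftrightarrow> P (bp \<alpha> k x)" and x: "x \<in> C"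
  shows "P x \<longleftrightarrow> P (bp \<alpha> (k * j) x)"
proof (induction j rule: int_induct[where k = 0])
  case (step1 i)
  have "bp \<alpha> (k * (i + 1)) x = bp \<alpha> k (bp \<alpha> (k * i) x)"
    using bp_add[OF x, of k "k * i"] by (simp add: algebra_simps)
  then show ?case using step1 inv bp_in x by simp
next
  case (step2 i)
  have "bp \<alpha> k (bp \<alpha> (k * (i - 1)) x) = bp \<alpha> (k * i) x"
    using bp_add[OF x, of k "k * (i - 1)"] by (simp add: algebra_simps)
  then show ?case using step2 inv bp_in x by metis
qed simp

lemma orb_self: "x \<in> orb \<alpha> k x"
  unfolding orb_def by (rule CollectI, rule exI[of _ 0], simp)

lemma orb_shift: "x \<in> C \<Longrightarrow> orb \<alpha> k (bp \<alpha> (k * i) x) = orb \<alpha> k x"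
proof -
  assume x: "x \<in> C"
  have shift: "bp \<alpha> (k * j) (bp \<alpha> (k * i) x) = bp \<alpha> (k * (j + i)) x" for j
    using x by (simp add: bp_add distrib_left)
  have "bp \<alpha> (k * j) x = bp \<alpha> (k * (j - i)) (bp \<alpha> (k * i) x)" for j
    using shift[of "j - i"] by simp
  then show ?thesis
    unfolding orb_def using shift by blast
qed

lemma orb_eq: "x \<in> C \<Longrightarrow> z \<in> orb \<alpha> k x \<Longrightarrow> orb \<alpha> k z = orb \<alpha> k x"
  using orb_shift unfolding orb_def by blast

lemma orb_subset_orb1: "orb \<alpha> k x \<subseteq> V x"
  by (auto simp: orb_def)

lemma orb1_eq: "x \<in> C \<Longrightarrow> z \<in> orb \<alpha> k x \<Longrightarrow> V z = V x"
  using orb_subset_orb1 orb_eq by blast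

lemma orb1_bmap: "x \<in> C \<Longrightarrow> V (\<beta> x) = V x"
  using orb_shift[of x 1 1] by (simp add: bp_1)

lemma orb1_binv: "x \<in> C \<Longrightarrow> V (\<beta>' x) = V x"
  using orb_shift[of x 1 "-1"] by (simp add: bp_minus_1)

lemma bp_eq_imp_period: "x \<in> C \<Longrightarrow> bp \<alpha> a x = bp \<alpha> b x \<Longrightarrow> bp \<alpha> (a - b) x = x"
  using bp_add[of x "- b" a] bp_cancel[of x b] by simp

lemma bp_period_abs: "x \<in> C \<Longrightarrow> bp \<alpha> p x = x \<Longrightarrow> bp \<alpha> \<bar>p\<bar> x = x"
  using bp_cancel[of x p] by (cases "p \<ge> 0") auto

lemma bp_period_mod:
  assumes x: "x \<in> C" and p: "bp \<alpha> p x = x"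
  shows "bp \<alpha> j x = bp \<alpha> (j mod p) x"
proof -
  have "bp \<alpha> (p * i) x = x" for i
  proof (induction i rule: int_induct[where k = 0])
    case (step1 i)
    then show ?case using bp_add[OF x, of "p * i" p] p by (simp add: algebra_simps)
  next
    case (step2 i)
    then show ?case using bp_add[OF x, of "p * i" "- p"] bp_cancel[OF x, of p] p
      by (simp add: algebra_simps)
  qed simp
  then show ?thesis
    using bp_add[OF x, of "j mod p" "p * (j div p)"] by (simp add: mod_mult_div_eq)
qed

lemma infinite_orb_no_period:
  assumes x: "x \<in> C" and inf: "infinite (V x)" and k: "bp \<alpha> k x = x"
  shows "k = 0"
proof (rule ccontr)
  assume "k \<noteq> 0"
  have "V x \<subseteq> (\<lambda>r. bp \<alpha> r x) ` {0..<\<bar>k\<bar>}"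
  proof
    fix z assume "z \<in> V x"
    then obtain j where "z = bp \<alpha> j x" by (auto simp: orb_def)
    moreover have "j mod \<bar>k\<bar> \<in> {0..<\<bar>k\<bar>}" using \<open>k \<noteq> 0\<close> by simp
    ultimately show "z \<in> (\<lambda>r. bp \<alpha> r x) ` {0..<\<bar>k\<bar>}"
      using bp_period_mod[OF x bp_period_abs[OF x k]] by blast
  qed
  then show False using inf finite_subset by blast
qed

lemma finite_orb_has_period:
  assumes x: "x \<in> C" and fin: "finite (V x)"
  shows "\<exists>p::nat. p > 0 \<and> bp \<alpha> (int p) x = x"
proof -
  have "range (\<lambda>j::int. bp \<alpha> j x) \<subseteq> V x" by (auto simp: orb_def)
  then have "\<not> inj (\<lambda>j::int. bp \<alpha> j x)"
    using fin by (meson finite_imageD finite_subset infinite_UNIV_int)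
  then obtain a b where "a \<noteq> b" "bp \<alpha> a x = bp \<alpha> b x" by (auto simp: inj_on_def)
  then have "bp \<alpha> (int (nat \<bar>a - b\<bar>)) x = x" "nat \<bar>a - b\<bar> > 0"
    using bp_period_abs[OF x bp_eq_imp_period[OF x]] by auto
  then show ?thesis by blast
qed

text \<open>The orbit of a point with least period \<open>q\<close> is enumerated without repetition by
  \<open>bp \<alpha> r x\<close>, \<open>0 \<le> r < q\<close>; so its size divides every period.\<close>

lemma card_orb_dvd_period:
  assumes x: "x \<in> C" and fin: "finite (V x)" and k: "bp \<alpha> k x = x"
  shows "int (card (V x)) dvd k"
proof -
  define q where "q = (LEAST p::nat. p > 0 \<and> bp \<alpha> (int p) x = x)"
  have q: "q > 0" "bp \<alpha> (int q) x = x"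
    using LeastI_ex[OF finite_orb_has_period[OF x fin]] by (auto simp: q_def)
  have q_least: "bp \<alpha> (int p) x \<noteq> x" if "0 < p" "p < q" for p
    using that not_less_Least by (auto simp: q_def)
  have dvd: "int q dvd j" if "bp \<alpha> j x = x" for j
  proof -
    have "bp \<alpha> (int (nat (j mod int q))) x = x"
      using that bp_period_mod[OF x q(2), of j] q(1) by simp
    moreover have "nat (j mod int q) < q" using q(1) by (simp add: nat_less_iff)
    ultimately have "nat (j mod int q) = 0"
      using q_least by blast
    then have "j mod int q = 0" using q(1) pos_mod_sign[of "int q" j] by linarith
    then show ?thesis by auto
  qed
  have "V x = (\<lambda>r. bp \<alpha> r x) ` {0..<int q}"
    using bp_period_mod[OF x q(2)] q(1) by (fastforce simp: orb_def)
  moreover have "inj_on (\<lambda>r. bp \<alpha> r x) {0..<int q}"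
  proof
    fix a b assume ab: "a \<in> {0..<int q}" "b \<in> {0..<int q}" "bp \<alpha> a x = bp \<alpha> b x"
    then have "int q dvd a - b" using dvd bp_eq_imp_period[OF x] by blast
    then show "a = b"
      using ab(1,2) dvd_imp_le_int[of "a - b" "int q"] by (cases "a = b") auto
  qed
  ultimately have "card (V x) = q" by (simp add: card_image)
  then show ?thesis using dvd k by simp
qed

lemma bp_mem_orb_dvd:
  assumes x: "x \<in> C" and card_dvd: "finite (V x) \<Longrightarrow> k dvd int (card (V x))"
    and j: "bp \<alpha> j x \<in> orb \<alpha> k x"
  shows "k dvd j"
proof -
  obtain i where "bp \<alpha> j x = bp \<alpha> (k * i) x" using j by (auto simp: orb_def)
  then have period: "bp \<alpha> (j - k * i) x = x" by (rule bp_eq_imp_period[OF x])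
  have "k dvd j - k * i"
  proof (cases "finite (V x)")
    case True
    then show ?thesis using card_dvd card_orb_dvd_period[OF x True period] dvd_trans by blast
  next
    case False
    then show ?thesis using infinite_orb_no_period[OF x False period] by simp
  qed
  then show ?thesis by (metis dvd_add dvd_triv_left diff_add_cancel)
qed

end

section \<open>Words and the relations of BS(m,n)\<close>

definition flip :: "letter \<Rightarrow> letter" where
  "flip s = (fst s, \<not> snd s)"

definition winv :: "word \<Rightarrow> word" where
  "winv w = rev (map flip w)"

lemma flip_flip [simp]: "flip (flip s) = s"
  by (simp add: flip_def)

lemma winv_Nil [simp]: "winv [] = []"
  by (simp add: winv_def)

lemma winv_Cons [simp]: "winv (s # w) = winv w @ [flip s]"
  by (simp add: winv_def)

lemma winv_append [simp]: "winv (u @ v) = winv v @ winv u"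
  by (simp add: winv_def)

definition t_count :: "word \<Rightarrow> nat" where
  "t_count w = length (filter (\<lambda>s. fst s = T) w)"

lemma t_count_Nil [simp]: "t_count [] = 0"
  by (simp add: t_count_def)

lemma t_count_append [simp]: "t_count (u @ v) = t_count u + t_count v"
  by (simp add: t_count_def)

lemma t_count_Cons [simp]: "t_count (s # w) = (if fst s = T then 1 else 0) + t_count w"
  by (simp add: t_count_def)

lemma t_count_bpow [simp]: "t_count (bpow k) = 0"
  by (simp add: t_count_def bpow_def)

lemma t_count_b_word: "\<forall>s \<in> set w. fst s = B \<Longrightarrow> t_count w = 0"
  by (induction w) auto

fun b_exponent :: "word \<Rightarrow> int" where
  "b_exponent [] = 0"
| "b_exponent (s # w) = (if snd s then 1 else -1) + b_exponent w"

context
  fixes m n :: int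
begin

abbreviation bs_equiv (infix "\<approx>" 50) where
  "u \<approx> v \<equiv> bs_eq m n u v"

lemma bs_equiv_trans [trans]: "u \<approx> v \<Longrightarrow> v \<approx> w \<Longrightarrow> u \<approx> w"
  by (rule bs_eq.trans)

lemma bs_equiv_append_left: "u \<approx> v \<Longrightarrow> a @ u \<approx> a @ v"
  using bs_eq.cong[of m n u v a "[]"] by simp

lemma bs_equiv_append_right: "u \<approx> v \<Longrightarrow> u @ c \<approx> v @ c"
  using bs_eq.cong[of m n u v "[]" c] by simp

lemma bs_equiv_append: "u \<approx> u' \<Longrightarrow> v \<approx> v' \<Longrightarrow> u @ v \<approx> u' @ v'"
  by (meson bs_equiv_append_left bs_equiv_append_right bs_equiv_trans)

lemma flip_cancel: "[s, flip s] \<approx> []"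
  using bs_eq.cancel[of m n "fst s" "snd s"] by (simp add: flip_def)

lemma winv_cancel: "winv w @ w \<approx> []"
proof (induction w rule: rev_induct)
  case (snoc s w)
  have "winv (w @ [s]) @ w @ [s] = [flip s] @ (winv w @ w) @ [s]" by simp
  also have "\<dots> \<approx> [flip s] @ [] @ [s]" by (rule bs_eq.cong[OF snoc])
  also have "[flip s] @ [] @ [s] \<approx> []" using flip_cancel[of "flip s"] by simp
  finally show ?case .
qed (simp add: bs_eq.refl)

lemma cls_eq_iff: "cls m n u = cls m n v \<longleftrightarrow> u \<approx> v"
  unfolding cls_def by (auto intro: bs_eq.refl bs_eq.sym bs_eq.trans)

lemma bpow_0 [simp]: "bpow 0 = []"
  by (simp add: bpow_def)

lemma bpow_succ: "(B, True) # bpow k \<approx> bpow (k + 1)"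
proof (cases "k \<ge> 0")
  case True
  then have "nat (k + 1) = Suc (nat k)" by simp
  then show ?thesis using True by (simp add: bpow_def bs_eq.refl)
next
  case False
  then have "nat (- k) = Suc (nat (- (k + 1)))" by simp
  then have "bpow k = (B, False) # bpow (k + 1)"
    using False by (cases "k + 1 = 0") (auto simp: bpow_def)
  then have "(B, True) # bpow k = [(B, True), flip (B, True)] @ bpow (k + 1)"
    by (simp add: flip_def)
  also have "\<dots> \<approx> [] @ bpow (k + 1)" by (rule bs_equiv_append_right[OF flip_cancel])
  finally show ?thesis by simp
qed

lemma bpow_pred: "(B, False) # bpow k \<approx> bpow (k - 1)"
proof (cases "k \<le> 0")
  case True
  then have "nat (- (k - 1)) = Suc (nat (- k))" by simp
  then show ?thesis using True by (cases "k = 0") (auto simp: bpow_def bs_eq.refl)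
next
  case False
  then have "nat k = Suc (nat (k - 1))" by simp
  then have "bpow k = (B, True) # bpow (k - 1)"
    using False by (auto simp: bpow_def)
  then have "(B, False) # bpow k = [(B, False), flip (B, False)] @ bpow (k - 1)"
    by (simp add: flip_def)
  also have "\<dots> \<approx> [] @ bpow (k - 1)" by (rule bs_equiv_append_right[OF flip_cancel])
  finally show ?thesis by simp
qed

lemma bpow_add: "bpow a @ bpow b \<approx> bpow (a + b)"
proof (induction a rule: int_induct[where k = 0])
  case (step1 i)
  have "bpow (i + 1) @ bpow b \<approx> [(B, True)] @ (bpow i @ bpow b)"
    using bs_equiv_append_right[OF bs_eq.sym[OF bpow_succ]] by simp
  also have "\<dots> \<approx> [(B, True)] @ bpow (i + b)" by (rule bs_equiv_append_left[OF step1(2)])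
  also have "\<dots> \<approx> bpow (i + b + 1)" using bpow_succ by simp
  finally show ?case by (simp add: ac_simps)
next
  case (step2 i)
  have "bpow (i - 1) @ bpow b \<approx> [(B, False)] @ (bpow i @ bpow b)"
    using bs_equiv_append_right[OF bs_eq.sym[OF bpow_pred]] by simp
  also have "\<dots> \<approx> [(B, False)] @ bpow (i + b)" by (rule bs_equiv_append_left[OF step2(2)])
  also have "\<dots> \<approx> bpow (i + b - 1)" using bpow_pred by simp
  finally show ?case by (simp add: algebra_simps)
qed (simp add: bs_eq.refl)

lemma b_word_equiv_bpow: "\<forall>s \<in> set w. fst s = B \<Longrightarrow> w \<approx> bpow (b_exponent w)"
proof (induction w)
  case (Cons s w)
  then have IH: "w \<approx> bpow (b_exponent w)" and s: "s = (B, snd s)"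
    by (auto simp: prod_eq_iff)
  have "s # w \<approx> [s] @ bpow (b_exponent w)"
    using bs_equiv_append_left[OF IH, of "[s]"] by simp
  also have "\<dots> \<approx> bpow (b_exponent (s # w))"
    using bpow_succ[of "b_exponent w"] bpow_pred[of "b_exponent w"] s
    by (cases "snd s") (simp_all add: ac_simps)
  finally show ?case .
qed (simp add: bs_eq.refl)

definition conj_bpow :: "letter \<Rightarrow> int \<Rightarrow> word" where
  "conj_bpow s k = [s] @ bpow k @ [flip s]"

lemma conj_bpow_add: "conj_bpow s a @ conj_bpow s b \<approx> conj_bpow s (a + b)"
proof -
  have "conj_bpow s a @ conj_bpow s b = [s] @ bpow a @ [flip s, s] @ bpow b @ [flip s]"
    by (simp add: conj_bpow_def)
  also have "\<dots> \<approx> [s] @ bpow a @ [] @ bpow b @ [flip s]"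
    using flip_cancel[of "flip s"] by (intro bs_equiv_append_left bs_equiv_append_right) simp
  also have "\<dots> = [s] @ (bpow a @ bpow b) @ [flip s]" by simp
  also have "\<dots> \<approx> [s] @ bpow (a + b) @ [flip s]" by (rule bs_eq.cong[OF bpow_add])
  finally show ?thesis by (simp add: conj_bpow_def)
qed

lemma conj_bpow_0: "conj_bpow s 0 \<approx> []"
  using flip_cancel[of s] by (simp add: conj_bpow_def)

lemma conj_bpow_mult:
  assumes h: "conj_bpow s p \<approx> bpow q" shows "conj_bpow s (p * i) \<approx> bpow (q * i)"
proof (induction i rule: int_induct[where k = 0])
  case (step1 i)
  have "conj_bpow s (p * (i + 1)) = conj_bpow s (p * i + p)" by (simp add: algebra_simps)
  also have "\<dots> \<approx> conj_bpow s (p * i) @ conj_bpow s p" by (rule bs_eq.sym[OF conj_bpow_add])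
  also have "\<dots> \<approx> bpow (q * i) @ bpow q" by (rule bs_equiv_append[OF step1(2) h])
  also have "\<dots> \<approx> bpow (q * i + q)" by (rule bpow_add)
  finally show ?case by (simp add: algebra_simps)
next
  case (step2 i)
  have "conj_bpow s (- p) \<approx> conj_bpow s (- p) @ (bpow q @ bpow (- q))"
    using bs_equiv_append_left[OF bs_eq.sym[OF bpow_add[of q "- q"]]] by simp
  also have "\<dots> \<approx> (conj_bpow s (- p) @ conj_bpow s p) @ bpow (- q)"
    using bs_eq.cong[OF bs_eq.sym[OF h], of "conj_bpow s (- p)" "bpow (- q)"] by simp
  also have "\<dots> \<approx> conj_bpow s (- p + p) @ bpow (- q)" by (rule bs_equiv_append_right[OF conj_bpow_add])
  also have "\<dots> \<approx> [] @ bpow (- q)" using bs_equiv_append_right[OF conj_bpow_0[of s]] by simp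
  finally have inv: "conj_bpow s (- p) \<approx> bpow (- q)" by simp
  have "conj_bpow s (p * (i - 1)) = conj_bpow s (p * i + - p)" by (simp add: algebra_simps)
  also have "\<dots> \<approx> conj_bpow s (p * i) @ conj_bpow s (- p)" by (rule bs_eq.sym[OF conj_bpow_add])
  also have "\<dots> \<approx> bpow (q * i) @ bpow (- q)" by (rule bs_equiv_append[OF step2(2) inv])
  also have "\<dots> \<approx> bpow (q * i + - q)" by (rule bpow_add)
  finally show ?case by (simp add: algebra_simps)
qed (simp add: conj_bpow_0)

lemma conj_bpow_t: "conj_bpow (T, True) m \<approx> bpow n"
  using bs_eq.relator[of m n] by (simp add: conj_bpow_def flip_def)

lemma conj_bpow_tinv: "conj_bpow (T, False) n \<approx> bpow m"
proof -
  have "conj_bpow (T, False) n = [(T, False)] @ bpow n @ [(T, True)]"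
    by (simp add: conj_bpow_def flip_def)
  also have "\<dots> \<approx> [(T, False)] @ conj_bpow (T, True) m @ [(T, True)]"
    by (rule bs_eq.cong[OF bs_eq.sym[OF conj_bpow_t]])
  also have "\<dots> = [(T, False), (T, True)] @ bpow m @ [(T, False), (T, True)]"
    by (simp add: conj_bpow_def flip_def)
  also have "\<dots> \<approx> [] @ bpow m @ []"
    using flip_cancel[of "(T, False)"] by (intro bs_equiv_append bs_equiv_append_left) (simp_all add: flip_def)
  finally show ?thesis by simp
qed

lemma t_conj_bpow_mult:
  "[(T, b)] @ bpow ((if b then m else n) * i) @ [(T, \<not> b)] \<approx> bpow ((if b then n else m) * i)"
  using conj_bpow_mult[OF conj_bpow_t, of i] conj_bpow_mult[OF conj_bpow_tinv, of i]
  by (cases b) (simp_all add: conj_bpow_def flip_def)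

end

section \<open>Saturated pre-actions act on words\<close>

definition tau :: "'a preact \<Rightarrow> 'a \<Rightarrow> 'a" where
  "tau \<alpha> x = the (tmap \<alpha> x)"

definition tinv :: "'a preact \<Rightarrow> 'a \<Rightarrow> 'a" where
  "tinv \<alpha> x = (THE z. tmap \<alpha> z = Some x)"

fun step :: "'a preact \<Rightarrow> 'a \<Rightarrow> letter \<Rightarrow> 'a" where
  "step \<alpha> x (B, True) = bmap \<alpha> x"
| "step \<alpha> x (B, False) = inv_into (carrier \<alpha>) (bmap \<alpha>) x"
| "step \<alpha> x (T, True) = tau \<alpha> x"
| "step \<alpha> x (T, False) = tinv \<alpha> x"

definition act :: "'a preact \<Rightarrow> 'a \<Rightarrow> word \<Rightarrow> 'a" where
  "act \<alpha> x w = foldl (step \<alpha>) x w"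

lemma act_Nil [simp]: "act \<alpha> x [] = x"
  by (simp add: act_def)

lemma act_Cons [simp]: "act \<alpha> x (s # w) = act \<alpha> (step \<alpha> x s) w"
  by (simp add: act_def)

lemma act_append: "act \<alpha> x (u @ v) = act \<alpha> (act \<alpha> x u) v"
  by (simp add: act_def)

locale saturated_preaction = bmap_bij \<alpha> for \<alpha> :: "'a preact" +
  fixes m n :: int
  assumes pre_action: "pre_action m n \<alpha>"
    and saturated: "saturated \<alpha>"
begin

lemma dom_tmap: "dom (tmap \<alpha>) = C"
  using saturated by (simp add: saturated_def)

lemma ran_tmap: "ran (tmap \<alpha>) = C"
  using saturated by (simp add: saturated_def)

lemma tau_Some: "x \<in> C \<Longrightarrow> tmap \<alpha> x = Some (tau \<alpha> x)"
  using dom_tmap by (force simp: tau_def)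

lemma tau_in: "x \<in> C \<Longrightarrow> tau \<alpha> x \<in> C"
  using tau_Some ran_tmap by (metis ranI)

lemma tmap_Some_in: "tmap \<alpha> z = Some x \<Longrightarrow> z \<in> C"
  using dom_tmap by auto

lemma tmap_Some_inj: "tmap \<alpha> z = Some x \<Longrightarrow> tmap \<alpha> z' = Some x \<Longrightarrow> z = z'"
  using pre_action tmap_Some_in dom_tmap by (metis inj_on_def pre_action_def)

lemma tinv_eq: "tmap \<alpha> z = Some x \<Longrightarrow> tinv \<alpha> x = z"
  unfolding tinv_def by (rule the_equality) (auto intro: tmap_Some_inj)

lemma tmap_tinv: "x \<in> C \<Longrightarrow> tmap \<alpha> (tinv \<alpha> x) = Some x"
  using ran_tmap tinv_eq by (force simp: ran_def)

lemma tinv_in: "x \<in> C \<Longrightarrow> tinv \<alpha> x \<in> C"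
  using tmap_tinv tmap_Some_in by blast

lemma tau_tinv: "x \<in> C \<Longrightarrow> tau \<alpha> (tinv \<alpha> x) = x"
  using tmap_tinv by (simp add: tau_def)

lemma tinv_tau: "x \<in> C \<Longrightarrow> tinv \<alpha> (tau \<alpha> x) = x"
  using tau_Some tinv_eq by blast

lemma step_in: "x \<in> C \<Longrightarrow> step \<alpha> x s \<in> C"
  by (cases s; cases "fst s"; cases "snd s") (auto simp: bmap_in binv_in tau_in tinv_in)

lemma act_in: "x \<in> C \<Longrightarrow> act \<alpha> x w \<in> C"
  by (induction w arbitrary: x) (auto simp: step_in)

lemma step_flip: "x \<in> C \<Longrightarrow> step \<alpha> (step \<alpha> x s) (flip s) = x"
  by (cases s; cases "fst s"; cases "snd s") (auto simp: flip_def binv_bmap bmap_binv tinv_tau tau_tinv)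

lemma act_winv: "x \<in> C \<Longrightarrow> act \<alpha> (act \<alpha> x w) (winv w) = x"
  by (induction w arbitrary: x) (simp_all add: act_append step_in step_flip)

lemma sch_path_iff: "sch_path \<alpha> x w y \<longleftrightarrow> x \<in> C \<and> y = act \<alpha> x w"
proof
  assume "sch_path \<alpha> x w y"
  then show "x \<in> C \<and> y = act \<alpha> x w"
  proof (induction rule: sch_path.induct)
    case (t_bwd z x w y)
    then show ?case using tinv_eq tmap_Some_in ran_tmap by (auto intro: ranI)
  qed (auto simp: tau_def tmap_Some_in)
next
  assume "x \<in> C \<and> y = act \<alpha> x w"
  then show "sch_path \<alpha> x w y"
  proof (induction w arbitrary: x)
    case (Cons s w)
    then have x: "x \<in> C" and IH: "sch_path \<alpha> (step \<alpha> x s) w y" using step_in by auto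
    show ?case
      using IH x tau_Some tmap_tinv
      by (cases s; cases "fst s"; cases "snd s") (auto intro: sch_path.intros)
  qed (auto intro: sch_path.nil)
qed

lemma act_bpow: "x \<in> C \<Longrightarrow> act \<alpha> x (bpow k) = bp \<alpha> k x"
proof -
  have "act \<alpha> x (replicate j (B, True)) = (\<beta> ^^ j) x"
    and "act \<alpha> x (replicate j (B, False)) = (\<beta>' ^^ j) x" for j x
    by (induction j arbitrary: x) (auto simp: funpow_swap1)
  then show "act \<alpha> x (bpow k) = bp \<alpha> k x" by (simp add: bpow_def bp_def)
qed

lemma bp_tau: "x \<in> C \<Longrightarrow> bp \<alpha> m (tau \<alpha> x) = tau \<alpha> (bp \<alpha> n x)"
  using pre_action dom_tmap by (simp add: pre_action_def tau_def)

lemma tau_bp_mult: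
  assumes x: "x \<in> C" shows "tau \<alpha> (bp \<alpha> (n * j) x) = bp \<alpha> (m * j) (tau \<alpha> x)"
proof (induction j rule: int_induct[where k = 0])
  case (step1 i)
  have "tau \<alpha> (bp \<alpha> (n * (i + 1)) x) = tau \<alpha> (bp \<alpha> n (bp \<alpha> (n * i) x))"
    using bp_add[OF x, of n "n * i"] by (simp add: algebra_simps)
  also have "\<dots> = bp \<alpha> m (tau \<alpha> (bp \<alpha> (n * i) x))" using bp_tau bp_in x by simp
  also have "\<dots> = bp \<alpha> m (bp \<alpha> (m * i) (tau \<alpha> x))" using step1 by simp
  also have "\<dots> = bp \<alpha> (m * (i + 1)) (tau \<alpha> x)"
    using bp_add[OF tau_in[OF x], of m "m * i"] by (simp add: algebra_simps)
  finally show ?case .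
next
  case (step2 i)
  define y where "y = bp \<alpha> (n * (i - 1)) x"
  have y: "y \<in> C" using x bp_in by (simp add: y_def)
  have "bp \<alpha> n y = bp \<alpha> (n * i) x"
    using bp_add[OF x, of n "n * (i - 1)"] by (simp add: y_def algebra_simps)
  then have "bp \<alpha> m (tau \<alpha> y) = bp \<alpha> (m * i) (tau \<alpha> x)" using step2 bp_tau y by simp
  then have "tau \<alpha> y = bp \<alpha> (- m) (bp \<alpha> (m * i) (tau \<alpha> x))"
    using bp_cancel[OF tau_in[OF y]] by metis
  then show ?case
    using bp_add[OF tau_in[OF x], of "- m" "m * i"] by (simp add: y_def algebra_simps)
qed simp

lemma act_bs_eq: "bs_eq m n u v \<Longrightarrow> x \<in> C \<Longrightarrow> act \<alpha> x u = act \<alpha> x v"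
proof (induction arbitrary: x rule: bs_eq.induct)
  case (cong u v a c)
  then show ?case by (simp add: act_append act_in)
next
  case (cancel g s)
  then show ?case using step_flip[of x "(g, s)"] by (simp add: flip_def)
next
  case relator
  have "act \<alpha> x ([(T, True)] @ bpow m @ [(T, False)]) = tinv \<alpha> (bp \<alpha> m (tau \<alpha> x))"
    using relator tau_in by (simp add: act_append act_bpow)
  also have "\<dots> = bp \<alpha> n x" using bp_tau relator tinv_tau bp_in by simp
  finally show ?case using relator by (simp add: act_bpow)
qed auto

end

section \<open>Orbit--stabiliser for transitive saturated pre-actions\<close>

lemma coset_act_coset: "coset_act m n (coset m n H w) s = coset m n H (w @ [s])"
proof -
  have "cls m n (u' @ [s]) = cls m n (u @ w @ [s])" if "cls m n u' = cls m n (u @ w)" for u u'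
    using that bs_equiv_append_right[of m n u' "u @ w" "[s]"] by (simp add: cls_eq_iff)
  moreover have "cls m n (u @ w @ [s]) = cls m n ((u @ w) @ [s])" for u by simp
  ultimately show ?thesis
    unfolding coset_act_def coset_def by blast
qed

context saturated_preaction
begin

lemma stab_mem_iff:
  assumes x0: "x0 \<in> C" shows "cls m n u \<in> stab m n \<alpha> x0 \<longleftrightarrow> act \<alpha> x0 u = x0"
proof
  assume "cls m n u \<in> stab m n \<alpha> x0"
  then obtain l where "bs_eq m n u l" "sch_path \<alpha> x0 l x0"
    by (auto simp: stab_def cls_eq_iff)
  then show "act \<alpha> x0 u = x0" using act_bs_eq x0 sch_path_iff by metis
next
  assume "act \<alpha> x0 u = x0"
  then show "cls m n u \<in> stab m n \<alpha> x0" using sch_path_iff x0 by (auto simp: stab_def)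
qed

lemma coset_eq_iff_act:
  assumes x0: "x0 \<in> C"
  shows "coset m n (stab m n \<alpha> x0) w1 = coset m n (stab m n \<alpha> x0) w2 \<longleftrightarrow> act \<alpha> x0 w1 = act \<alpha> x0 w2"
    (is "?H w1 = ?H w2 \<longleftrightarrow> _")
proof
  assume eq: "?H w1 = ?H w2"
  have "cls m n [] \<in> stab m n \<alpha> x0" using stab_mem_iff[OF x0, of "[]"] by simp
  then have "cls m n ([] @ w1) \<in> ?H w1" unfolding coset_def by blast
  then have "cls m n w1 \<in> ?H w2" using eq by simp
  then obtain u where u: "cls m n w1 = cls m n (u @ w2)" "cls m n u \<in> stab m n \<alpha> x0"
    unfolding coset_def by blast
  have "act \<alpha> x0 w1 = act \<alpha> x0 (u @ w2)" using act_bs_eq u(1) x0 by (simp add: cls_eq_iff)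
  then show "act \<alpha> x0 w1 = act \<alpha> x0 w2" using u(2) stab_mem_iff[OF x0] by (simp add: act_append)
next
  have subset: "?H w1 \<subseteq> ?H w2" if h: "act \<alpha> x0 w1 = act \<alpha> x0 w2" for w1 w2
  proof
    fix X assume "X \<in> ?H w1"
    then obtain u where u: "X = cls m n (u @ w1)" "cls m n u \<in> stab m n \<alpha> x0"
      unfolding coset_def by blast
    define u' where "u' = u @ w1 @ winv w2"
    have "act \<alpha> x0 u' = x0"
      using u(2) stab_mem_iff[OF x0] h act_winv x0 by (simp add: act_append u'_def)
    then have "cls m n u' \<in> stab m n \<alpha> x0" using stab_mem_iff[OF x0] by simp
    moreover have "bs_eq m n (u' @ w2) (u @ w1)"
      using bs_eq.cong[OF winv_cancel[of m n w2], of "u @ w1" "[]"] by (simp add: u'_def)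
    then have "X = cls m n (u' @ w2)" using u(1) cls_eq_iff by blast
    ultimately show "X \<in> ?H w2" unfolding coset_def by blast
  qed
  assume "act \<alpha> x0 w1 = act \<alpha> x0 w2"
  then show "?H w1 = ?H w2" using subset by (simp add: subset_antisym)
qed

lemma orbit_stabiliser:
  assumes x0: "x0 \<in> C" and reach: "\<And>z. z \<in> C \<Longrightarrow> \<exists>u. act \<alpha> x0 u = z"
  defines "H \<equiv> stab m n \<alpha> x0"
  shows "\<exists>\<phi>. bij_betw \<phi> C (coset_space m n H) \<and> \<phi> x0 = coset m n H []
    \<and> (\<forall>x \<in> C. \<phi> (bmap \<alpha> x) = coset_act m n (\<phi> x) (B, True)
               \<and> \<phi> (the (tmap \<alpha> x)) = coset_act m n (\<phi> x) (T, True))"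
proof -
  define \<phi> where "\<phi> z = coset m n H (SOME u. act \<alpha> x0 u = z)" for z
  have \<phi>_act: "\<phi> (act \<alpha> x0 u) = coset m n H u" for u
    using someI_ex[OF reach[OF act_in[OF x0]]] coset_eq_iff_act[OF x0] by (simp add: \<phi>_def H_def)
  have "\<phi> (step \<alpha> x s) = coset_act m n (\<phi> x) s" if x: "x \<in> C" for x s
  proof -
    obtain u where "x = act \<alpha> x0 u" using reach[OF x] by blast
    then have "step \<alpha> x s = act \<alpha> x0 (u @ [s])" by (simp add: act_append)
    then show ?thesis using \<open>x = act \<alpha> x0 u\<close> \<phi>_act coset_act_coset by simp
  qed
  then have "\<phi> (bmap \<alpha> x) = coset_act m n (\<phi> x) (B, True)"
    and "\<phi> (the (tmap \<alpha> x)) = coset_act m n (\<phi> x) (T, True)" if "x \<in> C" for x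
    using that by (metis step.simps(1), metis step.simps(3) tau_def)
  moreover have "bij_betw \<phi> C (coset_space m n H)"
  proof (rule bij_betw_imageI)
    show "inj_on \<phi> C"
    proof
      fix z1 z2 assume "z1 \<in> C" "z2 \<in> C" "\<phi> z1 = \<phi> z2"
      moreover obtain u1 u2 where "z1 = act \<alpha> x0 u1" "z2 = act \<alpha> x0 u2"
        using reach \<open>z1 \<in> C\<close> \<open>z2 \<in> C\<close> by metis
      ultimately show "z1 = z2" using \<phi>_act coset_eq_iff_act[OF x0] by (simp add: H_def)
    qed
    have "coset m n H u \<in> \<phi> ` C" for u
      using \<phi>_act[of u] act_in[OF x0, of u] by (metis imageI)
    moreover have "\<phi> z \<in> coset_space m n H" if "z \<in> C" for z
      using reach[OF that] \<phi>_act by (auto simp: coset_space_def)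
    ultimately show "\<phi> ` C = coset_space m n H" by (auto simp: coset_space_def)
  qed
  ultimately show ?thesis using \<phi>_act[of "[]"] by auto
qed

end

section \<open>The Bass--Serre graph of a saturated pre-action\<close>

context saturated_preaction
begin

lemma tau_image_orb: "x \<in> C \<Longrightarrow> tau \<alpha> ` orb \<alpha> n x = orb \<alpha> m (tau \<alpha> x)"
  using tau_bp_mult unfolding orb_def by (auto intro!: image_eqI)

lemma bs_opp_pos: "x \<in> C \<Longrightarrow> bs_opp \<alpha> (True, orb \<alpha> n x) = (False, orb \<alpha> m (tau \<alpha> x))"
  using tau_image_orb by (simp add: bs_opp_def tau_def[abs_def])

lemma bs_opp_neg:
  assumes x: "x \<in> C" shows "bs_opp \<alpha> (False, orb \<alpha> m (tau \<alpha> x)) = (True, orb \<alpha> n x)"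
proof -
  have tmap_orb: "tmap \<alpha> (bp \<alpha> (n * j) x) = Some (bp \<alpha> (m * j) (tau \<alpha> x))" for j
    using tau_Some[OF bp_in[OF x]] tau_bp_mult[OF x] by simp
  have "{z. \<exists>y \<in> orb \<alpha> m (tau \<alpha> x). tmap \<alpha> z = Some y} = orb \<alpha> n x"
    using tmap_orb tmap_Some_inj unfolding orb_def by blast
  then show ?thesis by (simp add: bs_opp_def)
qed

lemma bs_E_iff:
  "e \<in> bs_E m n \<alpha> \<longleftrightarrow> (\<exists>x \<in> C. e = (True, orb \<alpha> n x) \<or> e = (False, orb \<alpha> m (tau \<alpha> x)))"
proof
  assume "e \<in> bs_E m n \<alpha>"
  then obtain y where "y \<in> C" "e = (True, orb \<alpha> n y) \<or> e = (False, orb \<alpha> m y)"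
    unfolding bs_E_def using dom_tmap ran_tmap by blast
  moreover have "orb \<alpha> m y = orb \<alpha> m (tau \<alpha> (tinv \<alpha> y))" if "y \<in> C" for y
    using tau_tinv that by simp
  ultimately show "\<exists>x \<in> C. e = (True, orb \<alpha> n x) \<or> e = (False, orb \<alpha> m (tau \<alpha> x))"
    using tinv_in by blast
next
  assume "\<exists>x \<in> C. e = (True, orb \<alpha> n x) \<or> e = (False, orb \<alpha> m (tau \<alpha> x))"
  then show "e \<in> bs_E m n \<alpha>"
    unfolding bs_E_def using dom_tmap ran_tmap tau_in by blast
qed

lemma bs_opp_in_E: "e \<in> bs_E m n \<alpha> \<Longrightarrow> bs_opp \<alpha> e \<in> bs_E m n \<alpha>"
  unfolding bs_E_iff using bs_opp_pos bs_opp_neg by fastforce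

lemma bs_opp_opp: "e \<in> bs_E m n \<alpha> \<Longrightarrow> bs_opp \<alpha> (bs_opp \<alpha> e) = e"
  unfolding bs_E_iff using bs_opp_pos bs_opp_neg by fastforce

lemma bs_opp_eq_iff:
  "e \<in> bs_E m n \<alpha> \<Longrightarrow> e' \<in> bs_E m n \<alpha> \<Longrightarrow> bs_opp \<alpha> e = e' \<longleftrightarrow> e = bs_opp \<alpha> e'"
  using bs_opp_opp[of e] bs_opp_opp[of e'] by auto

lemma bs_opp_neq: "bs_opp \<alpha> e \<noteq> e"
  by (cases e) (auto simp: bs_opp_def)

lemma bs_src_orb:
  assumes x: "x \<in> C" shows "bs_src \<alpha> (b, orb \<alpha> k x) = V x"
proof -
  have "(\<Union>z \<in> orb \<alpha> k x. V z) = (\<Union>z \<in> orb \<alpha> k x. V x)"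
    using orb1_eq[OF x] by (rule SUP_cong[OF HOL.refl])
  then show ?thesis using orb_self[of x k] by (auto simp: bs_src_def)
qed

lemma bs_tgt_opp: "e \<in> bs_E m n \<alpha> \<Longrightarrow> bs_tgt \<alpha> (bs_opp \<alpha> e) = bs_src \<alpha> e"
  by (simp add: bs_tgt_def bs_opp_opp)

lemma orb1_in_bs_V: "x \<in> C \<Longrightarrow> V x \<in> bs_V \<alpha>"
  by (simp add: bs_V_def)

lemma bs_src_in_V: "e \<in> bs_E m n \<alpha> \<Longrightarrow> bs_src \<alpha> e \<in> bs_V \<alpha>"
  unfolding bs_E_iff by (auto simp: bs_src_orb orb1_in_bs_V tau_in)

lemma bs_tgt_in_V: "e \<in> bs_E m n \<alpha> \<Longrightarrow> bs_tgt \<alpha> e \<in> bs_V \<alpha>"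
  using bs_src_in_V bs_opp_in_E by (simp add: bs_tgt_def)

text \<open>The edge of \<open>BS(\<alpha>)\<close> crossed by the letter \<open>(T, b)\<close> at \<open>x\<close>.\<close>

definition t_edge :: "'a \<Rightarrow> bool \<Rightarrow> bool \<times> 'a set" where
  "t_edge x b = (if b then (True, orb \<alpha> n x) else (False, orb \<alpha> m x))"

lemma t_edge_in_E: "x \<in> C \<Longrightarrow> t_edge x b \<in> bs_E m n \<alpha>"
  unfolding t_edge_def bs_E_iff using tau_tinv tinv_in by (cases b) force+

lemma t_edge_src: "x \<in> C \<Longrightarrow> bs_src \<alpha> (t_edge x b) = V x"
  by (simp add: t_edge_def bs_src_orb)

lemma t_edge_tgt: "x \<in> C \<Longrightarrow> bs_tgt \<alpha> (t_edge x b) = V (step \<alpha> x (T, b))"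
  using bs_opp_pos bs_opp_neg[of "tinv \<alpha> x"] tau_tinv tinv_in
  by (cases b) (auto simp: t_edge_def bs_tgt_def bs_src_orb tau_in)

lemma bs_E_t_edge: "e \<in> bs_E m n \<alpha> \<Longrightarrow> \<exists>x b. x \<in> C \<and> e = t_edge x b"
  unfolding bs_E_iff t_edge_def using tau_in by (metis (full_types))

lemma orb1_step_B: "x \<in> C \<Longrightarrow> V (step \<alpha> x (B, b)) = V x"
  by (cases b) (auto simp: orb1_bmap orb1_binv)

lemma orb1_act_b_word: "y \<in> C \<Longrightarrow> \<forall>s \<in> set w. fst s = B \<Longrightarrow> V (act \<alpha> y w) = V y"
proof (induction w arbitrary: y)
  case (Cons s w)
  then obtain b where "s = (B, b)" by (cases s) auto
  then show ?case using Cons orb1_step_B step_in by simp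
qed simp

lemma t_edge_eq_opp:
  assumes p: "p \<in> C" and y': "y' \<in> C"
    and opp: "t_edge y' b' = bs_opp \<alpha> (t_edge p b)"
  shows "b' = (\<not> b) \<and> y' \<in> orb \<alpha> (if b then m else n) (step \<alpha> p (T, b))"
proof (cases b)
  case True
  then have "t_edge y' b' = (False, orb \<alpha> m (tau \<alpha> p))"
    using opp bs_opp_pos[OF p] by (simp add: t_edge_def)
  then show ?thesis using True orb_self[of y' m] by (auto simp: t_edge_def split: if_splits)
next
  case False
  have "t_edge p b = (False, orb \<alpha> m (tau \<alpha> (tinv \<alpha> p)))"
    using False tau_tinv[OF p] by (simp add: t_edge_def)
  then have "t_edge y' b' = (True, orb \<alpha> n (tinv \<alpha> p))"
    using opp bs_opp_neg[OF tinv_in[OF p]] by simp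
  then show ?thesis using False orb_self[of y' n] by (auto simp: t_edge_def split: if_splits)
qed

end

section \<open>Walks and edge balance\<close>

definition rev_walk :: "'a preact \<Rightarrow> (bool \<times> 'a set) list \<Rightarrow> (bool \<times> 'a set) list" where
  "rev_walk \<alpha> es = rev (map (bs_opp \<alpha>) es)"

definition edge_balance :: "'a preact \<Rightarrow> bool \<times> 'a set \<Rightarrow> (bool \<times> 'a set) list \<Rightarrow> int" where
  "edge_balance \<alpha> e es = int (count_list es e) - int (count_list es (bs_opp \<alpha> e))"

lemma edge_balance_append [simp]:
  "edge_balance \<alpha> e (es @ fs) = edge_balance \<alpha> e es + edge_balance \<alpha> e fs"
  by (simp add: edge_balance_def)

lemma edge_balance_Cons [simp]:
  "edge_balance \<alpha> e (f # es) =
     (if f = e then 1 else 0) - (if f = bs_opp \<alpha> e then 1 else 0) + edge_balance \<alpha> e es"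
  by (simp add: edge_balance_def)

lemma edge_balance_Nil [simp]: "edge_balance \<alpha> e [] = 0"
  by (simp add: edge_balance_def)

lemma edge_balance_avoid:
  "\<forall>f \<in> set es. f \<noteq> e \<and> f \<noteq> bs_opp \<alpha> e \<Longrightarrow> edge_balance \<alpha> e es = 0"
  by (induction es) auto

lemma walk_vertices: "bs_walk m n \<alpha> W v es w \<Longrightarrow> v \<in> W \<and> w \<in> W"
  by (induction rule: bs_walk.induct) auto

lemma walk_mono: "bs_walk m n \<alpha> W v es w \<Longrightarrow> W \<subseteq> W' \<Longrightarrow> bs_walk m n \<alpha> W' v es w"
  by (induction rule: bs_walk.induct) (auto intro: bs_walk.intros)

lemma walk_edges: "bs_walk m n \<alpha> W v es w \<Longrightarrow> set es \<subseteq> bs_E m n \<alpha>"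
  by (induction rule: bs_walk.induct) auto

lemma walk_Nil: "bs_walk m n \<alpha> W v [] w \<longleftrightarrow> v \<in> W \<and> w = v"
  by (auto elim: bs_walk.cases intro: bs_walk.intros)

lemma walk_Cons: "bs_walk m n \<alpha> W v (e # es) w \<longleftrightarrow>
    e \<in> bs_E m n \<alpha> \<and> bs_src \<alpha> e = v \<and> v \<in> W \<and> bs_walk m n \<alpha> W (bs_tgt \<alpha> e) es w"
  by (auto elim: bs_walk.cases intro: bs_walk.intros)

lemma walk_append: "bs_walk m n \<alpha> W v (es @ fs) w \<longleftrightarrow>
    (\<exists>u. bs_walk m n \<alpha> W v es u \<and> bs_walk m n \<alpha> W u fs w)"
proof (induction es arbitrary: v)
  case Nil
  then show ?case using walk_vertices[of m n \<alpha> W v fs w] by (auto simp: walk_Nil)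
qed (auto simp: walk_Cons)

lemma walk_single: "bs_walk m n \<alpha> W v [e] w \<longleftrightarrow>
    e \<in> bs_E m n \<alpha> \<and> bs_src \<alpha> e = v \<and> v \<in> W \<and> w = bs_tgt \<alpha> e \<and> w \<in> W"
  by (auto simp: walk_Cons walk_Nil)

context saturated_preaction
begin

lemma walk_rev: "bs_walk m n \<alpha> W v es w \<Longrightarrow> bs_walk m n \<alpha> W w (rev_walk \<alpha> es) v"
proof (induction rule: bs_walk.induct)
  case (nil v)
  then show ?case by (simp add: rev_walk_def walk_Nil)
next
  case (cons e v es w)
  have "bs_walk m n \<alpha> W (bs_tgt \<alpha> e) [bs_opp \<alpha> e] v"
    using cons walk_vertices[OF cons.hyps(4)]
    by (simp add: walk_single bs_opp_in_E bs_tgt_opp) (simp add: bs_tgt_def)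
  then show ?case using cons by (auto simp: walk_append rev_walk_def)
qed

lemma edge_balance_rev_walk:
  assumes "set es \<subseteq> bs_E m n \<alpha>" "e \<in> bs_E m n \<alpha>"
  shows "edge_balance \<alpha> e (rev_walk \<alpha> es) = - edge_balance \<alpha> e es"
  using assms
proof (induction es)
  case (Cons f es)
  then have "bs_opp \<alpha> f = e \<longleftrightarrow> f = bs_opp \<alpha> e" "bs_opp \<alpha> f = bs_opp \<alpha> e \<longleftrightarrow> f = e"
    using bs_opp_eq_iff bs_opp_opp by (auto, metis)
  with Cons show ?case by (simp add: rev_walk_def)
qed (simp add: rev_walk_def)

text \<open>Cancelling backtracks \<open>e, bs_opp \<alpha> e\<close> preserves every edge balance.\<close>

lemma walk_reduce:
  "bs_walk m n \<alpha> W v es w \<Longrightarrow> e \<in> bs_E m n \<alpha> \<Longrightarrow>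
   \<exists>es'. bs_walk m n \<alpha> W v es' w \<and> reduced \<alpha> es' \<and> edge_balance \<alpha> e es' = edge_balance \<alpha> e es"
proof (induction "length es" arbitrary: es rule: less_induct)
  case less
  show ?case
  proof (cases "reduced \<alpha> es")
    case False
    then obtain i where i: "Suc i < length es" "es ! Suc i = bs_opp \<alpha> (es ! i)"
      by (auto simp: reduced_def)
    define f where "f = es ! i"
    define es1 where "es1 = take i es"
    define es2 where "es2 = drop (Suc (Suc i)) es"
    have es: "es = es1 @ [f, bs_opp \<alpha> f] @ es2"
      using i id_take_nth_drop[of i es] Cons_nth_drop_Suc[of "Suc i" es]
      by (simp add: es1_def es2_def f_def)
    from less.prems(1) obtain u1 u2 where
      w1: "bs_walk m n \<alpha> W v es1 u1" and wf: "bs_walk m n \<alpha> W u1 [f, bs_opp \<alpha> f] u2"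
      and w2: "bs_walk m n \<alpha> W u2 es2 w"
      unfolding es walk_append by blast
    have f: "f \<in> bs_E m n \<alpha>" using wf by (auto simp: walk_Cons)
    then have "u2 = u1" using wf by (auto simp: walk_Cons walk_Nil bs_tgt_opp)
    then have short: "bs_walk m n \<alpha> W v (es1 @ es2) w" using w1 w2 by (auto simp: walk_append)
    have "edge_balance \<alpha> e [f, bs_opp \<alpha> f] = 0"
      using bs_opp_eq_iff[OF f less.prems(2)] bs_opp_opp[OF f] bs_opp_opp[OF less.prems(2)]
      by auto
    then have "edge_balance \<alpha> e (es1 @ es2) = edge_balance \<alpha> e es" by (simp add: es)
    moreover have "length (es1 @ es2) < length es" using es by simp
    ultimately show ?thesis using less.hyps short less.prems(2) by metis
  qed (use less in blast)
qed

lemma forest_edge_balance: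
  assumes "is_forest m n \<alpha> W" "bs_walk m n \<alpha> W v es v" "e \<in> bs_E m n \<alpha>"
  shows "edge_balance \<alpha> e es = 0"
proof (rule ccontr)
  assume ne: "edge_balance \<alpha> e es \<noteq> 0"
  obtain es' where es': "bs_walk m n \<alpha> W v es' v" "reduced \<alpha> es'"
    "edge_balance \<alpha> e es' = edge_balance \<alpha> e es"
    using walk_reduce[OF assms(2,3)] by blast
  then have "es' \<noteq> []" using ne by auto
  then show False using assms(1) es' by (auto simp: is_forest_def)
qed

end

section \<open>Maximal forest saturations\<close>

lemma child_lab_dvd:
  assumes "child_lab m n pos L = enat c"
  shows "(if pos then m else n) dvd int c"
proof -
  have dvd: "a dvd a * l div gcd l b" for a l b :: nat
    by (metis div_mult_swap gcd_dvd1 dvd_triv_left)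
  obtain l where "L = enat l" using assms by (cases L) (auto simp: child_lab_def)
  then have "c = (if pos then nat \<bar>m\<bar> * l div gcd l (nat \<bar>n\<bar>)
                 else nat \<bar>n\<bar> * l div gcd l (nat \<bar>m\<bar>))"
    using assms by (simp add: child_lab_def del: gcd_nat_abs_right_eq)
  then have "nat \<bar>if pos then m else n\<bar> dvd c"
    by (cases pos) (simp_all only: if_True if_False dvd)
  then show ?thesis by (metis abs_dvd_iff int_dvd_int_iff int_nat_eq abs_ge_zero)
qed

locale forest_saturation = saturated_preaction \<alpha> m n for \<alpha> :: "'a preact" and m n +
  fixes \<alpha>0 :: "'a preact"
  assumes pre_action0: "pre_action m n \<alpha>0"
    and extends_old: "extends \<alpha> \<alpha>0"
    and old_edges: "{e \<in> bs_E m n \<alpha>. bs_src \<alpha> e \<in> bs_V \<alpha>0 \<and> bs_tgt \<alpha> e \<in> bs_V \<alpha>0} = bs_E m n \<alpha>0"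
    and forest: "is_forest m n \<alpha> (bs_V \<alpha> - bs_V \<alpha>0)"
    and attach: "\<forall>v \<in> bs_V \<alpha> - bs_V \<alpha>0. \<exists>!e. e \<in> bs_E m n \<alpha> \<and> bs_src \<alpha> e \<in> bs_V \<alpha>0
                 \<and> bs_tgt \<alpha> e \<in> component m n \<alpha> (bs_V \<alpha> - bs_V \<alpha>0) v"
    and labels: "\<forall>e \<in> bs_E m n \<alpha>. bs_tgt \<alpha> e \<in> bs_V \<alpha> - bs_V \<alpha>0
            \<and> dist_to m n \<alpha> (bs_V \<alpha>0) (bs_src \<alpha> e) < dist_to m n \<alpha> (bs_V \<alpha>0) (bs_tgt \<alpha> e)
            \<longrightarrow> lab (bs_tgt \<alpha> e) = child_lab m n (fst e) (lab (bs_src \<alpha> e))"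

lemma max_forest_saturation_imp_forest_saturation:
  assumes "pre_action m n \<alpha>0" "max_forest_saturation m n \<alpha>0 \<alpha>"
  shows "forest_saturation \<alpha> m n \<alpha>0"
  using assms unfolding max_forest_saturation_def Let_def
  by unfold_locales (simp_all add: pre_action_def)

sublocale forest_saturation \<subseteq> old: bmap_bij \<alpha>0
  using pre_action0 by unfold_locales (simp add: pre_action_def)

context forest_saturation
begin

abbreviation "C0 \<equiv> carrier \<alpha>0"
abbreviation "V0 \<equiv> bs_V \<alpha>0"
abbreviation "N \<equiv> bs_V \<alpha> - bs_V \<alpha>0"
abbreviation "E \<equiv> bs_E m n \<alpha>"
abbreviation "depth \<equiv> dist_to m n \<alpha> (bs_V \<alpha>0)"
abbreviation "walk \<equiv> bs_walk m n \<alpha>"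

lemma old_carrier_subset: "C0 \<subseteq> C"
  using extends_old by (simp add: extends_def)

lemma bmap_old: "x \<in> C0 \<Longrightarrow> \<beta> x = bmap \<alpha>0 x"
  using extends_old by (simp add: extends_def)

lemma tmap_old: "tmap \<alpha>0 x = Some y \<Longrightarrow> tmap \<alpha> x = Some y"
  using extends_old by (auto simp: extends_def map_le_def dom_def)

lemma binv_old:
  assumes x: "x \<in> C0" shows "\<beta>' x = old.\<beta>' x"
proof -
  have "old.\<beta>' x \<in> C" "\<beta> (old.\<beta>' x) = x"
    using x old.binv_in old.bmap_binv bmap_old old_carrier_subset by auto
  then show ?thesis using binv_bmap by metis
qed

lemma bp_old: assumes x: "x \<in> C0" shows "bp \<alpha> k x = bp \<alpha>0 k x"
proof (induction k rule: int_induct[where k = 0])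
  case (step1 i)
  then show ?case
    using x old_carrier_subset bp_succ old.bp_succ bmap_old old.bp_in by auto
next
  case (step2 i)
  then show ?case
    using x old_carrier_subset bp_pred old.bp_pred binv_old old.bp_in by auto
qed simp

lemma orb_old: "x \<in> C0 \<Longrightarrow> orb \<alpha> k x = orb \<alpha>0 k x"
  using bp_old by (simp add: orb_def)

lemma old_vertices_subset: "V0 \<subseteq> bs_V \<alpha>"
  using orb_old old_carrier_subset unfolding bs_V_def by (metis image_cong image_mono)

lemma orb1_in_old_iff: "x \<in> C \<Longrightarrow> V x \<in> V0 \<longleftrightarrow> x \<in> C0"
proof
  assume "x \<in> C" "V x \<in> V0"
  then obtain y where y: "y \<in> C0" "V x = V y" using orb_old by (auto simp: bs_V_def)
  then have "x \<in> V y" using orb_self[of x 1] by simp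
  then show "x \<in> C0" using y bp_old old.bp_in by (auto simp: orb_def)
qed (simp add: orb_old bs_V_def)

lemma walk_component: "walk N v es w \<Longrightarrow> w \<in> component m n \<alpha> N v"
  by (auto simp: component_def)

lemma attach_unique:
  "v \<in> N \<Longrightarrow> e1 \<in> E \<Longrightarrow> bs_src \<alpha> e1 \<in> V0 \<Longrightarrow> bs_tgt \<alpha> e1 \<in> component m n \<alpha> N v
   \<Longrightarrow> e2 \<in> E \<Longrightarrow> bs_src \<alpha> e2 \<in> V0 \<Longrightarrow> bs_tgt \<alpha> e2 \<in> component m n \<alpha> N v \<Longrightarrow> e1 = e2"
  using attach by blast

lemma walk_to_old: assumes v: "v \<in> bs_V \<alpha>" shows "\<exists>es w. walk (bs_V \<alpha>) v es w \<and> w \<in> V0"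
proof (cases "v \<in> V0")
  case True
  then show ?thesis using v by (intro exI[of _ "[]"]) (auto simp: walk_Nil)
next
  case False
  then obtain e where e: "e \<in> E" "bs_src \<alpha> e \<in> V0" "bs_tgt \<alpha> e \<in> component m n \<alpha> N v"
    using attach v by blast
  then obtain es where "walk N v es (bs_tgt \<alpha> e)" by (auto simp: component_def)
  then have "walk (bs_V \<alpha>) v es (bs_tgt \<alpha> e)" using walk_mono by blast
  moreover have "walk (bs_V \<alpha>) (bs_tgt \<alpha> e) [bs_opp \<alpha> e] (bs_src \<alpha> e)"
    using e bs_tgt_in_V bs_opp_in_E bs_tgt_opp old_vertices_subset
    by (auto simp: walk_single bs_tgt_def)
  ultimately have "walk (bs_V \<alpha>) v (es @ [bs_opp \<alpha> e]) (bs_src \<alpha> e)"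
    by (auto simp: walk_append)
  then show ?thesis using e(2) by blast
qed

lemma depth_geodesic:
  assumes "v \<in> bs_V \<alpha>" shows "\<exists>es w. walk (bs_V \<alpha>) v es w \<and> w \<in> V0 \<and> length es = depth v"
proof -
  let ?P = "\<lambda>k. \<exists>es w. walk (bs_V \<alpha>) v es w \<and> w \<in> V0 \<and> length es = k"
  obtain es w where "walk (bs_V \<alpha>) v es w" "w \<in> V0" using walk_to_old[OF assms] by blast
  then have "?P (LEAST k. ?P k)" by (intro LeastI) blast
  then show ?thesis by (simp add: dist_to_def)
qed

lemma depth_le: "walk (bs_V \<alpha>) v es w \<Longrightarrow> w \<in> V0 \<Longrightarrow> depth v \<le> length es"
  unfolding dist_to_def by (rule Least_le) blast

lemma depth_old: "v \<in> V0 \<Longrightarrow> depth v = 0"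
  using depth_le[of v "[]" v] old_vertices_subset by (auto simp: walk_Nil)

lemma depth_zero_imp_old: "v \<in> bs_V \<alpha> \<Longrightarrow> depth v = 0 \<Longrightarrow> v \<in> V0"
  using depth_geodesic by (fastforce simp: walk_Nil)

lemma depth_edge:
  assumes e: "e \<in> E" shows "depth (bs_src \<alpha> e) \<le> depth (bs_tgt \<alpha> e) + 1"
proof -
  obtain es w where g: "walk (bs_V \<alpha>) (bs_tgt \<alpha> e) es w" "w \<in> V0" "length es = depth (bs_tgt \<alpha> e)"
    using depth_geodesic bs_tgt_in_V[OF e] by blast
  then have "walk (bs_V \<alpha>) (bs_src \<alpha> e) (e # es) w" using e bs_src_in_V by (simp add: walk_Cons)
  then show ?thesis using depth_le g by fastforce
qed

lemma geodesic_depths: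
  "walk (bs_V \<alpha>) v es w \<Longrightarrow> w \<in> V0 \<Longrightarrow> length es = depth v \<Longrightarrow>
   \<forall>e \<in> set es. depth (bs_tgt \<alpha> e) < depth v"
proof (induction es arbitrary: v)
  case (Cons e es)
  then have e: "e \<in> E" "bs_src \<alpha> e = v" and w: "walk (bs_V \<alpha>) (bs_tgt \<alpha> e) es w"
    by (auto simp: walk_Cons)
  have "depth (bs_tgt \<alpha> e) \<le> length es" using depth_le[OF w Cons.prems(2)] .
  moreover have "depth v \<le> depth (bs_tgt \<alpha> e) + 1" using depth_edge[OF e(1)] e(2) by simp
  ultimately have "length es = depth (bs_tgt \<alpha> e)" "depth (bs_tgt \<alpha> e) < depth v"
    using Cons.prems(3) by auto
  then show ?case using Cons.IH[OF w Cons.prems(2)] by auto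
qed simp

lemma walk_first_exit:
  "walk (bs_V \<alpha>) v es w \<Longrightarrow> v \<in> N \<Longrightarrow> w \<in> V0 \<Longrightarrow>
   \<exists>es' f. walk N v es' (bs_src \<alpha> f) \<and> f \<in> E \<and> bs_tgt \<alpha> f \<in> V0 \<and> set es' \<subseteq> set es"
proof (induction es arbitrary: v)
  case (Cons e es)
  then have e: "e \<in> E" "bs_src \<alpha> e = v" and w: "walk (bs_V \<alpha>) (bs_tgt \<alpha> e) es w"
    by (auto simp: walk_Cons)
  show ?case
  proof (cases "bs_tgt \<alpha> e \<in> V0")
    case True
    then show ?thesis using e Cons.prems(2) by (intro exI[of _ "[]"] exI[of _ e]) (auto simp: walk_Nil)
  next
    case False
    then obtain es' f where "walk N (bs_tgt \<alpha> e) es' (bs_src \<alpha> f)" "f \<in> E" "bs_tgt \<alpha> f \<in> V0"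
      "set es' \<subseteq> set es"
      using Cons.IH[OF w _ Cons.prems(3)] bs_tgt_in_V[OF e(1)] by blast
    then show ?thesis using e Cons.prems(2)
      by (intro exI[of _ "e # es'"] exI[of _ f]) (auto simp: walk_Cons)
  qed
qed (simp add: walk_Nil)

lemma exit_walk:
  assumes a: "a \<in> N"
  shows "\<exists>es f. walk N a es (bs_src \<alpha> f) \<and> f \<in> E \<and> bs_tgt \<alpha> f \<in> V0
    \<and> (\<forall>e \<in> set es. depth (bs_tgt \<alpha> e) < depth a)"
proof -
  obtain es w where g: "walk (bs_V \<alpha>) a es w" "w \<in> V0" "length es = depth a"
    using depth_geodesic a by blast
  then show ?thesis using walk_first_exit[OF g(1) a g(2)] geodesic_depths[OF g] by blast
qed

lemma exit_walks_same_root: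
  assumes b: "b \<in> N" and P: "walk N b P a"
    and fa: "walk N a es_a (bs_src \<alpha> f_a)" "f_a \<in> E" "bs_tgt \<alpha> f_a \<in> V0"
    and fb: "walk N b es_b (bs_src \<alpha> f_b)" "f_b \<in> E" "bs_tgt \<alpha> f_b \<in> V0"
  shows "bs_src \<alpha> f_a = bs_src \<alpha> f_b"
proof -
  have "walk N b (P @ es_a) (bs_src \<alpha> f_a)" using P fa(1) by (auto simp: walk_append)
  then have "bs_tgt \<alpha> (bs_opp \<alpha> f_a) \<in> component m n \<alpha> N b"
    using bs_tgt_opp[OF fa(2)] walk_component by simp
  moreover have "bs_tgt \<alpha> (bs_opp \<alpha> f_b) \<in> component m n \<alpha> N b"
    using bs_tgt_opp[OF fb(2)] walk_component fb(1) by simp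
  moreover have "bs_src \<alpha> (bs_opp \<alpha> f_a) \<in> V0" "bs_src \<alpha> (bs_opp \<alpha> f_b) \<in> V0"
    using fa(3) fb(3) by (simp_all add: bs_tgt_def)
  ultimately have "bs_opp \<alpha> f_a = bs_opp \<alpha> f_b"
    using attach_unique[OF b] bs_opp_in_E fa(2) fb(2) by blast
  then show ?thesis using bs_tgt_opp[OF fa(2)] bs_tgt_opp[OF fb(2)] by metis
qed

lemma exit_walk_edge_balance:
  assumes "\<forall>f \<in> set es. depth (bs_tgt \<alpha> f) < depth a" "e \<in> E"
    and "depth a \<le> depth (bs_src \<alpha> e)" "depth a \<le> depth (bs_tgt \<alpha> e)"
  shows "edge_balance \<alpha> e es = 0"
  using assms bs_tgt_opp[OF assms(2)] by (intro edge_balance_avoid) fastforce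

text \<open>Close up the walk with the exit walks of its two ends; in a forest the resulting loop
  has zero balance at every edge.\<close>

lemma forest_walk_edge_balance:
  assumes P: "walk N v P a" and e: "e \<in> E"
    and depth_e: "\<forall>u \<in> {a, v}. depth u \<le> depth (bs_src \<alpha> e) \<and> depth u \<le> depth (bs_tgt \<alpha> e)"
  shows "edge_balance \<alpha> e P = 0"
proof -
  have "a \<in> N" "v \<in> N" using walk_vertices[OF P] by auto
  then obtain es_a f_a es_v f_v where
    fa: "walk N a es_a (bs_src \<alpha> f_a)" "f_a \<in> E" "bs_tgt \<alpha> f_a \<in> V0"
      "\<forall>f \<in> set es_a. depth (bs_tgt \<alpha> f) < depth a" and
    fv: "walk N v es_v (bs_src \<alpha> f_v)" "f_v \<in> E" "bs_tgt \<alpha> f_v \<in> V0"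
      "\<forall>f \<in> set es_v. depth (bs_tgt \<alpha> f) < depth v"
    using exit_walk by meson
  have "bs_src \<alpha> f_a = bs_src \<alpha> f_v"
    using exit_walks_same_root[OF \<open>v \<in> N\<close> P fa(1-3) fv(1-3)] .
  then have "walk N v (P @ es_a @ rev_walk \<alpha> es_v) v"
    using P fa(1) walk_rev[OF fv(1)] by (auto simp: walk_append)
  then have "edge_balance \<alpha> e (P @ es_a @ rev_walk \<alpha> es_v) = 0"
    using forest_edge_balance[OF forest _ e] by blast
  moreover have "edge_balance \<alpha> e es_a = 0" "edge_balance \<alpha> e es_v = 0"
    using exit_walk_edge_balance[OF fa(4) e] exit_walk_edge_balance[OF fv(4) e] depth_e by auto
  ultimately show ?thesis
    using edge_balance_rev_walk[OF walk_edges[OF fv(1)] e] by simp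
qed

lemma depth_neq_across_edge:
  assumes e: "e \<in> E" and tgt: "bs_tgt \<alpha> e \<in> N"
  shows "depth (bs_src \<alpha> e) \<noteq> depth (bs_tgt \<alpha> e)"
proof
  assume eq: "depth (bs_src \<alpha> e) = depth (bs_tgt \<alpha> e)"
  have "depth (bs_tgt \<alpha> e) > 0" using depth_zero_imp_old tgt by auto
  then have "bs_src \<alpha> e \<in> N" using depth_old eq bs_src_in_V[OF e] by auto
  then have "walk N (bs_tgt \<alpha> e) [bs_opp \<alpha> e] (bs_src \<alpha> e)"
    using e bs_opp_in_E bs_tgt_opp tgt by (simp add: walk_single) (simp add: bs_tgt_def)
  then have "edge_balance \<alpha> e [bs_opp \<alpha> e] = 0"
    by (rule forest_walk_edge_balance[OF _ e]) (simp add: eq)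
  then show False using bs_opp_neq[of e] by simp
qed

lemma parent_edge_unique:
  assumes e1: "e1 \<in> E" and e2: "e2 \<in> E" and tgt: "bs_tgt \<alpha> e1 = bs_tgt \<alpha> e2" "bs_tgt \<alpha> e1 \<in> N"
    and up1: "depth (bs_src \<alpha> e1) < depth (bs_tgt \<alpha> e1)"
    and up2: "depth (bs_src \<alpha> e2) < depth (bs_tgt \<alpha> e2)"
  shows "e1 = e2"
proof (rule ccontr)
  assume ne: "e1 \<noteq> e2"
  define v u1 u2 where "v = bs_tgt \<alpha> e1" and "u1 = bs_src \<alpha> e1" and "u2 = bs_src \<alpha> e2"
  have "depth v \<le> depth u1 + 1" "depth v \<le> depth u2 + 1"
    using depth_edge[OF bs_opp_in_E[OF e1]] depth_edge[OF bs_opp_in_E[OF e2]] tgt(1)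
    by (simp_all add: bs_tgt_opp e1 e2 v_def u1_def u2_def) (simp_all add: bs_tgt_def)
  then have d: "depth u1 + 1 = depth v" "depth u2 = depth u1"
    using up1 up2 tgt(1) by (simp_all add: v_def u1_def u2_def)
  show False
  proof (cases "depth u1 = 0")
    case True
    then have "u1 \<in> V0" "u2 \<in> V0"
      using d depth_zero_imp_old bs_src_in_V e1 e2 by (auto simp: u1_def u2_def)
    moreover have "v \<in> component m n \<alpha> N v" using tgt(2) walk_component[of v "[]" v]
      by (simp add: walk_Nil v_def)
    ultimately show False using attach_unique[OF tgt(2) e1 _ _ e2] tgt ne
      by (simp add: u1_def u2_def v_def)
  next
    case False
    then have "u1 \<in> N" "u2 \<in> N"
      using d depth_old bs_src_in_V e1 e2 by (auto simp: u1_def u2_def)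
    then have "walk N u2 [e2, bs_opp \<alpha> e1] u1"
      using e1 e2 tgt bs_opp_in_E bs_tgt_opp
      by (simp add: walk_Cons walk_Nil u1_def u2_def) (simp add: bs_tgt_def)
    then have "edge_balance \<alpha> e1 [e2, bs_opp \<alpha> e1] = 0"
      by (rule forest_walk_edge_balance[OF _ e1]) (use d in \<open>simp add: u1_def u2_def v_def\<close>)
    moreover have "e2 \<noteq> bs_opp \<alpha> e1"
      using bs_tgt_opp[OF e1] tgt(1) d by (auto simp: u1_def v_def)
    ultimately show False using ne bs_opp_neq[of e1] by simp
  qed
qed

section \<open>Loops of the saturation come from the old pre-action\<close>

lemma t_step_old:
  assumes q: "q \<in> C0" and q': "step \<alpha> q (T, b) \<in> C0"
  shows "if b then tmap \<alpha>0 q = Some (tau \<alpha> q) else tmap \<alpha>0 (tinv \<alpha> q) = Some q"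
proof -
  have qC: "q \<in> C" using q old_carrier_subset by auto
  have "t_edge q b \<in> E" "bs_src \<alpha> (t_edge q b) \<in> V0" "bs_tgt \<alpha> (t_edge q b) \<in> V0"
    using t_edge_in_E[OF qC] t_edge_src[OF qC] t_edge_tgt[OF qC] orb1_in_old_iff q q' step_in qC
    by auto
  then have old_edge: "t_edge q b \<in> bs_E m n \<alpha>0" using old_edges by blast
  let ?k = "if b then n else m" and ?D = "if b then dom (tmap \<alpha>0) else ran (tmap \<alpha>0)"
  obtain x where x: "x \<in> ?D" "orb \<alpha>0 ?k x = orb \<alpha> ?k q"
    using old_edge by (cases b) (auto simp: bs_E_def t_edge_def)
  have "?D \<subseteq> C0" using pre_action0 by (simp add: pre_action_def)
  then have xC0: "x \<in> C0" using x(1) by blast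
  have "q \<in> orb \<alpha>0 ?k x" using x(2) orb_self[of q ?k] by simp
  then obtain j where q_eq: "q = bp \<alpha>0 (?k * j) x" by (auto simp: orb_def)
  have "\<forall>z \<in> C0. z \<in> ?D \<longleftrightarrow> bp \<alpha>0 ?k z \<in> ?D"
    using pre_action0 by (simp add: pre_action_def)
  then have "q \<in> ?D"
    using old.bp_mult_invariant[OF _ xC0, of "\<lambda>z. z \<in> ?D"] x(1) q_eq by blast
  then show ?thesis
  proof (cases b)
    case True
    then obtain z where "tmap \<alpha>0 q = Some z" using \<open>q \<in> ?D\<close> by auto
    then show ?thesis using True tmap_old tau_Some[OF qC] by fastforce
  next
    case False
    then obtain z where "tmap \<alpha>0 z = Some q" using \<open>q \<in> ?D\<close> by (auto simp: ran_def)
    then show ?thesis using False tmap_old tinv_eq by fastforce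
  qed
qed

lemma sch_path_old:
  "x \<in> C0 \<Longrightarrow> \<forall>i \<le> length w. act \<alpha> x (take i w) \<in> C0 \<Longrightarrow> sch_path \<alpha>0 x w (act \<alpha> x w)"
proof (induction w arbitrary: x)
  case (Cons s w)
  have x: "x \<in> C0" and s': "step \<alpha> x s \<in> C0"
    using Cons.prems(1) Cons.prems(2)[rule_format, of 1] by simp_all
  have "\<forall>i \<le> length w. act \<alpha> (step \<alpha> x s) (take i w) \<in> C0"
    using Cons.prems(2)[rule_format, of "Suc _"] by simp
  then have IH: "sch_path \<alpha>0 (step \<alpha> x s) w (act \<alpha> x (s # w))"
    using Cons.IH[OF s'] by simp
  obtain g b where s: "s = (g, b)" by (cases s)
  show ?case
    using IH x s s' bmap_old binv_old t_step_old[OF x, of b]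
    by (cases g; cases b) (auto intro: sch_path.intros)
qed (auto intro: sch_path.nil)

lemma sch_path_extends: "sch_path \<alpha>0 x w y \<Longrightarrow> sch_path \<alpha> x w y"
proof (induction rule: sch_path.induct)
  case (nil x)
  then show ?case using old_carrier_subset by (auto intro: sch_path.nil)
next
  case (b_fwd x w y)
  then show ?case using old_carrier_subset bmap_old by (auto intro: sch_path.b_fwd)
next
  case (b_bwd x w y)
  then show ?case using old_carrier_subset binv_old by (auto intro: sch_path.b_bwd)
next
  case (t_fwd x z w y)
  then show ?case using tmap_old by (auto intro: sch_path.t_fwd)
next
  case (t_bwd z x w y)
  then show ?case using tmap_old by (auto intro: sch_path.t_bwd)
qed

lemma parent_edge_orbit_dvd:
  assumes e: "e \<in> E" and y: "y \<in> C" and tgt: "bs_tgt \<alpha> e = V y" "V y \<in> N"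
    and up: "depth (bs_src \<alpha> e) < depth (bs_tgt \<alpha> e)"
    and j: "bp \<alpha> j y \<in> orb \<alpha> (if fst e then m else n) y"
  shows "(if fst e then m else n) dvd j"
proof (rule bp_mem_orb_dvd[OF y _ j])
  assume "finite (V y)"
  moreover have "lab (V y) = child_lab m n (fst e) (lab (bs_src \<alpha> e))"
    using labels e tgt up by auto
  ultimately show "(if fst e then m else n) dvd int (card (V y))"
    using child_lab_dvd by (simp add: lab_def)
qed

definition pdepth :: "'a \<Rightarrow> nat" where
  "pdepth x = depth (V x)"

lemma pdepth_zero_iff: "x \<in> C \<Longrightarrow> pdepth x = 0 \<longleftrightarrow> x \<in> C0"
  using depth_old depth_zero_imp_old orb1_in_old_iff orb1_in_bs_V by (auto simp: pdepth_def)

lemma pdepth_pos_new: "x \<in> C \<Longrightarrow> 0 < pdepth x \<Longrightarrow> V x \<in> N"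
  using depth_old orb1_in_bs_V by (auto simp: pdepth_def)

text \<open>The label condition makes the exponent of the \<open>b\<close>-word a multiple of \<open>m\<close> (resp. \<open>n\<close>),
  so the relator applies.\<close>

lemma backtrack_equiv_bpow:
  assumes p: "p \<in> C" and y: "y = step \<alpha> p (T, b)" and up: "pdepth p < pdepth y"
    and bw: "\<forall>s \<in> set bw. fst s = B"
    and returns: "t_edge (act \<alpha> y bw) b' = bs_opp \<alpha> (t_edge p b)"
  shows "\<exists>K. bs_eq m n ([(T, b)] @ bw @ [(T, b')]) (bpow K)"
proof -
  let ?k = "if b then m else n"
  have yC: "y \<in> C" using y step_in p by simp
  have yN: "V y \<in> N" using pdepth_pos_new[OF yC] up by simp
  have bw_eq: "bs_eq m n bw (bpow (b_exponent bw))" using b_word_equiv_bpow[OF bw] .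
  then have "act \<alpha> y bw = bp \<alpha> (b_exponent bw) y" using act_bs_eq[OF bw_eq yC] act_bpow[OF yC] by simp
  then have b': "b' = (\<not> b)" and "bp \<alpha> (b_exponent bw) y \<in> orb \<alpha> ?k y"
    using t_edge_eq_opp[OF p act_in[OF yC] returns] y by auto
  moreover have e: "bs_tgt \<alpha> (t_edge p b) = V y" "bs_src \<alpha> (t_edge p b) = V p"
    "fst (t_edge p b) = b"
    using t_edge_tgt[OF p] t_edge_src[OF p] y by (simp_all add: t_edge_def)
  ultimately have "?k dvd b_exponent bw"
    using parent_edge_orbit_dvd[OF t_edge_in_E[OF p] yC e(1) yN] up by (simp add: e pdepth_def)
  then obtain i where i: "b_exponent bw = ?k * i" by blast
  have "bs_eq m n ([(T, b)] @ bw @ [(T, b')]) ([(T, b)] @ bpow (?k * i) @ [(T, \<not> b)])"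
    unfolding b' i[symmetric] by (rule bs_eq.cong[OF bw_eq])
  also have "bs_eq m n \<dots> (bpow ((if b then n else m) * i))" by (rule t_conj_bpow_mult)
  finally show ?thesis by blast
qed

fun max_depth :: "'a \<Rightarrow> word \<Rightarrow> nat" where
  "max_depth x [] = pdepth x"
| "max_depth x (s # w) = max (pdepth x) (max_depth (step \<alpha> x s) w)"

lemma max_depth_ge: "i \<le> length w \<Longrightarrow> pdepth (act \<alpha> x (take i w)) \<le> max_depth x w"
proof (induction w arbitrary: x i)
  case (Cons s w)
  then show ?case by (cases i) (auto simp: le_max_iff_disj)
qed simp

lemma max_depth_suffix: "max_depth (act \<alpha> x u) v \<le> max_depth x (u @ v)"
  by (induction u arbitrary: x) (simp_all add: le_max_iff_disj)

lemma pdepth_step_B: "x \<in> C \<Longrightarrow> fst s \<noteq> T \<Longrightarrow> pdepth (step \<alpha> x s) = pdepth x"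
  using orb1_step_B[of x "snd s"] by (cases s; cases "fst s") (auto simp: pdepth_def)

lemma max_depth_zero_sch_path: "x \<in> C0 \<Longrightarrow> max_depth x w = 0 \<Longrightarrow> sch_path \<alpha>0 x w (act \<alpha> x w)"
  using max_depth_ge[of _ w x] pdepth_zero_iff act_in old_carrier_subset
  by (intro sch_path_old) (auto simp: le_zero_eq)

lemma split_at_max_depth:
  "x \<in> C \<Longrightarrow> pdepth x < d \<Longrightarrow> max_depth x w = d \<Longrightarrow>
   \<exists>a b r. w = a @ (T, b) # r \<and> pdepth (act \<alpha> x a) < d \<and> pdepth (step \<alpha> (act \<alpha> x a) (T, b)) = d"
proof (induction w arbitrary: x)
  case (Cons s w)
  have m: "max_depth (step \<alpha> x s) w = d" using Cons.prems by (auto simp: max_def split: if_splits)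
  show ?case
  proof (cases "pdepth (step \<alpha> x s) = d")
    case True
    then have "fst s = T"
      using pdepth_step_B[OF Cons.prems(1), of s] Cons.prems(2) by (cases "fst s = T") auto
    then show ?thesis using True Cons.prems(2)
      by (intro exI[of _ "[]"] exI[of _ "snd s"] exI[of _ w]) (cases s, auto)
  next
    case False
    then have "pdepth (step \<alpha> x s) < d" using max_depth_ge[of 0 w "step \<alpha> x s"] m by simp
    then obtain a b r where "w = a @ (T, b) # r" "pdepth (act \<alpha> (step \<alpha> x s) a) < d"
      "pdepth (step \<alpha> (act \<alpha> (step \<alpha> x s) a) (T, b)) = d"
      using Cons.IH[OF step_in[OF Cons.prems(1)] _ m] by blast
    then show ?thesis by (intro exI[of _ "s # a"] exI[of _ b] exI[of _ r]) auto
  qed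
qed simp

lemma split_at_first_t:
  "y \<in> C \<Longrightarrow> V (act \<alpha> y r) \<noteq> V y \<Longrightarrow>
   \<exists>bw b c. r = bw @ (T, b) # c \<and> (\<forall>s \<in> set bw. fst s = B)"
proof (induction r arbitrary: y)
  case (Cons s r)
  show ?case
  proof (cases "fst s = T")
    case True
    then show ?thesis by (intro exI[of _ "[]"] exI[of _ "snd s"] exI[of _ r]) (cases s, auto)
  next
    case False
    then obtain b where s: "s = (B, b)" by (cases s) (metis gen.exhaust fst_conv)
    then have "V (act \<alpha> (step \<alpha> y s) r) \<noteq> V (step \<alpha> y s)"
      using orb1_step_B[OF Cons.prems(1)] Cons.prems(2) by simp
    then obtain bw b' c where "r = bw @ (T, b') # c" "\<forall>s \<in> set bw. fst s = B"
      using Cons.IH[OF step_in[OF Cons.prems(1)]] by blast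
    then show ?thesis using s by (intro exI[of _ "s # bw"] exI[of _ b'] exI[of _ c]) auto
  qed
qed simp

lemma peak_decomposition:
  assumes x: "x \<in> C0" and w: "act \<alpha> x w \<in> C0" and d: "max_depth x w > 0"
  shows "\<exists>a b bw b' c. w = a @ (T, b) # bw @ (T, b') # c \<and> (\<forall>s \<in> set bw. fst s = B)
    \<and> pdepth (act \<alpha> x a) < pdepth (step \<alpha> (act \<alpha> x a) (T, b))
    \<and> pdepth (step \<alpha> (act \<alpha> (step \<alpha> (act \<alpha> x a) (T, b)) bw) (T, b'))
        \<le> pdepth (step \<alpha> (act \<alpha> x a) (T, b))"
proof -
  define d where "d = max_depth x w"
  have xC: "x \<in> C" using x old_carrier_subset by auto
  have "pdepth x < d" using pdepth_zero_iff[OF xC] x d by (simp add: d_def)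
  then obtain a b r where w_eq: "w = a @ (T, b) # r" and low: "pdepth (act \<alpha> x a) < d"
    and peak: "pdepth (step \<alpha> (act \<alpha> x a) (T, b)) = d"
    using split_at_max_depth[OF xC _ d_def[symmetric]] by blast
  define y where "y = step \<alpha> (act \<alpha> x a) (T, b)"
  have yC: "y \<in> C" using xC act_in step_in by (simp add: y_def)
  have "pdepth (act \<alpha> y r) = 0"
    using w pdepth_zero_iff act_in[OF yC] by (simp add: w_eq act_append y_def)
  then have "V (act \<alpha> y r) \<noteq> V y" using peak d by (auto simp: pdepth_def y_def d_def)
  then obtain bw b' c where r: "r = bw @ (T, b') # c" and bw: "\<forall>s \<in> set bw. fst s = B"
    using split_at_first_t[OF yC] by blast
  define z where "z = step \<alpha> (act \<alpha> y bw) (T, b')"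
  have "pdepth z \<le> max_depth z c" using max_depth_ge[of 0 c z] by simp
  also have "\<dots> \<le> d"
    using max_depth_suffix[of x "a @ (T, b) # bw @ [(T, b')]" c]
    by (simp add: w_eq r d_def z_def y_def act_append)
  finally show ?thesis
    using w_eq r bw low peak unfolding y_def z_def by blast
qed

text \<open>The walk climbs to a new vertex of maximal depth and leaves it again without going
  deeper; by uniqueness of parent edges it returns over the edge it came in by.\<close>

lemma peak_backtracks:
  assumes p: "p \<in> C" and y: "y = step \<alpha> p (T, b)" and bw: "\<forall>s \<in> set bw. fst s = B"
    and up: "pdepth p < pdepth y" and down: "pdepth (step \<alpha> (act \<alpha> y bw) (T, b')) \<le> pdepth y"
  shows "t_edge (act \<alpha> y bw) b' = bs_opp \<alpha> (t_edge p b)"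
proof -
  define y' p' where "y' = act \<alpha> y bw" and "p' = step \<alpha> y' (T, b')"
  have yC: "y \<in> C" and y'C: "y' \<in> C" using p y step_in act_in by (auto simp: y'_def)
  have yN: "V y \<in> N" using pdepth_pos_new[OF yC] up by simp
  define e e' where "e = t_edge p b" and "e' = bs_opp \<alpha> (t_edge y' b')"
  have e: "e \<in> E" "bs_src \<alpha> e = V p" "bs_tgt \<alpha> e = V y"
    using t_edge_in_E t_edge_src t_edge_tgt p by (auto simp: e_def y)
  have "V y' = V y" using orb1_act_b_word[OF yC bw] by (simp add: y'_def)
  then have e': "e' \<in> E" "bs_src \<alpha> e' = V p'" "bs_tgt \<alpha> e' = V y"
    using bs_opp_in_E[OF t_edge_in_E[OF y'C]] bs_tgt_opp[OF t_edge_in_E[OF y'C]]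
      t_edge_src[OF y'C] t_edge_tgt[OF y'C]
    by (simp_all add: e'_def p'_def) (simp add: bs_tgt_def)
  have "depth (V p') \<noteq> depth (V y)" using depth_neq_across_edge[OF e'(1)] e'(2,3) yN by simp
  then have "depth (V p') < depth (V y)" using down by (simp add: pdepth_def y'_def p'_def)
  then have "e = e'" using parent_edge_unique[OF e(1) e'(1)] e e' yN up by (simp add: pdepth_def)
  then show ?thesis using bs_opp_opp t_edge_in_E[OF y'C] by (simp add: e'_def e_def y'_def)
qed

lemma loop_equiv_old_path:
  "x \<in> C0 \<Longrightarrow> act \<alpha> x w \<in> C0 \<Longrightarrow>
   \<exists>w'. sch_path \<alpha>0 x w' (act \<alpha> x w) \<and> bs_eq m n w w'"
proof (induction "t_count w" arbitrary: w rule: less_induct)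
  case less
  have xC: "x \<in> C" using less.prems old_carrier_subset by auto
  show ?case
  proof (cases "max_depth x w = 0")
    case True
    then show ?thesis using max_depth_zero_sch_path[OF less.prems(1)] bs_eq.refl by blast
  next
    case False
    then obtain a b bw b' c where w: "w = a @ ([(T, b)] @ bw @ [(T, b')]) @ c"
      and bw: "\<forall>s \<in> set bw. fst s = B"
      and peak: "pdepth (act \<alpha> x a) < pdepth (step \<alpha> (act \<alpha> x a) (T, b))"
        "pdepth (step \<alpha> (act \<alpha> (step \<alpha> (act \<alpha> x a) (T, b)) bw) (T, b'))
           \<le> pdepth (step \<alpha> (act \<alpha> x a) (T, b))"
      using peak_decomposition[OF less.prems] by fastforce
    note returns = peak_backtracks[OF act_in[OF xC] HOL.refl bw peak]
    obtain K where "bs_eq m n ([(T, b)] @ bw @ [(T, b')]) (bpow K)"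
      using backtrack_equiv_bpow[OF act_in[OF xC] HOL.refl peak(1) bw returns] by blast
    then have shorter: "bs_eq m n w (a @ bpow K @ c)" unfolding w by (rule bs_eq.cong)
    moreover have "t_count (a @ bpow K @ c) < t_count w" using t_count_b_word[OF bw] by (simp add: w)
    moreover have "act \<alpha> x (a @ bpow K @ c) = act \<alpha> x w" using act_bs_eq[OF shorter xC] by simp
    ultimately show ?thesis using less.hyps less.prems bs_equiv_trans by metis
  qed
qed

lemma stab_eq_old:
  assumes x0: "x0 \<in> C0" shows "stab m n \<alpha> x0 = stab m n \<alpha>0 x0"
proof
  show "stab m n \<alpha> x0 \<subseteq> stab m n \<alpha>0 x0"
  proof
    fix X assume "X \<in> stab m n \<alpha> x0"
    then obtain w where X: "X = cls m n w" and "sch_path \<alpha> x0 w x0" by (auto simp: stab_def)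
    then have "act \<alpha> x0 w = x0" using sch_path_iff by simp
    then obtain w' where "sch_path \<alpha>0 x0 w' x0" "bs_eq m n w w'"
      using loop_equiv_old_path[OF x0] x0 by metis
    then show "X \<in> stab m n \<alpha>0 x0" using X cls_eq_iff by (auto simp: stab_def)
  qed
  show "stab m n \<alpha>0 x0 \<subseteq> stab m n \<alpha> x0"
    using sch_path_extends by (auto simp: stab_def)
qed

lemma walk_lift: "walk W v es v' \<Longrightarrow> q \<in> C \<Longrightarrow> V q = v \<Longrightarrow> \<exists>u. V (act \<alpha> q u) = v'"
proof (induction arbitrary: q rule: bs_walk.induct)
  case (nil v)
  then show ?case by (intro exI[of _ "[]"]) simp
next
  case (cons e v es v')
  obtain x b where x: "x \<in> C" "e = t_edge x b" using bs_E_t_edge[OF cons.hyps(1)] by blast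
  then have "x \<in> V q" using t_edge_src cons.hyps(2) cons.prems(2) orb_self[of x 1] by simp
  then obtain k where k: "x = bp \<alpha> k q" by (auto simp: orb_def)
  have "act \<alpha> q (bpow k @ [(T, b)]) = step \<alpha> x (T, b)"
    using act_bpow[OF cons.prems(1)] k by (simp add: act_append)
  moreover have "V (step \<alpha> x (T, b)) = bs_tgt \<alpha> e" using t_edge_tgt x by simp
  ultimately obtain u where "V (act \<alpha> (act \<alpha> q (bpow k @ [(T, b)])) u) = v'"
    using cons.IH step_in[OF x(1)] by metis
  then show ?case by (metis act_append)
qed

lemma act_reaches:
  assumes x0: "x0 \<in> C0" and tr: "transitive \<alpha>0" and z: "z \<in> C"
  shows "\<exists>u. act \<alpha> x0 u = z"
proof -
  obtain es v where "walk (bs_V \<alpha>) (V z) es v" "v \<in> V0"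
    using walk_to_old orb1_in_bs_V[OF z] by blast
  then obtain u where "V (act \<alpha> z u) \<in> V0" using walk_lift z by metis
  then have "act \<alpha> z u \<in> C0" using orb1_in_old_iff act_in z by blast
  then obtain u' where "sch_path \<alpha>0 (act \<alpha> z u) u' x0" using tr x0 by (auto simp: transitive_def)
  then have "act \<alpha> z (u @ u') = x0" using sch_path_extends sch_path_iff by (simp add: act_append)
  then show ?thesis using act_winv z by metis
qed

end

theorem mainTheorem12:
  fixes m n :: int and \<alpha>0 \<alpha> :: "'a preact" and x0 :: 'a
  assumes "\<bar>m\<bar> \<ge> 2" and "\<bar>n\<bar> \<ge> 2"
    and "pre_action m n \<alpha>0" and "transitive \<alpha>0" and "x0 \<in> carrier \<alpha>0"
    and "max_forest_saturation m n \<alpha>0 \<alpha>"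
  shows "stab m n \<alpha> x0 = stab m n \<alpha>0 x0
    \<and> (\<exists>\<phi>. bij_betw \<phi> (carrier \<alpha>) (coset_space m n (stab m n \<alpha>0 x0))
         \<and> \<phi> x0 = coset m n (stab m n \<alpha>0 x0) []
         \<and> (\<forall>x \<in> carrier \<alpha>. \<phi> (bmap \<alpha> x) = coset_act m n (\<phi> x) (B, True)
                        \<and> \<phi> (the (tmap \<alpha> x)) = coset_act m n (\<phi> x) (T, True)))"
proof -
  interpret forest_saturation \<alpha> m n \<alpha>0
    using max_forest_saturation_imp_forest_saturation assms(3,6) .
  have stab: "stab m n \<alpha> x0 = stab m n \<alpha>0 x0" using stab_eq_old assms(5) .
  have "x0 \<in> carrier \<alpha>" using assms(5) old_carrier_subset by blast
  then show ?thesis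
    using orbit_stabiliser[OF _ act_reaches[OF assms(5,4)]] stab by simp
qed

end
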